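(* A finite de Morgan algebra $\mathbf{M}$ is a perfect extension of its Boolean skeleton $B(\mathbf{M})$ if and only if $\mathbf{M}$ is isomorphic to a direct product of finitely many copies of $\{0,1\}$, $\{0,a,1\}$ and $\mathbf{M}_1$.
   Context: A de Morgan algebra is an algebra $(L;\vee,\wedge,{}^\circ,0,1)$ where $(L;\vee,\wedge,0,1)$ is a bounded distributive lattice and ${}^\circ$ is a unary operation satisfying $x^{\circ\circ}=x$, $(x\wedge y)^\circ=x^\circ\vee y^\circ$, $1^\circ=0$. Its Boolean skeleton is the subalgebra $B(\mathbf{M})=\{x\in M\mid x\vee x^\circ=1\}$. An algebra $\mathbf{A}$ is a perfect extension of its subalgebra $\mathbf{B}$ if every congruence of $\mathbf{B}$ has exactly one extension to a congruence of $\mathbf{A}$. $\mathbf{M}_1$ is the four-element de Morgan algebra on $\{0,a,b,1\}$ with lattice order $0<a,b<1$ ($a,b$ incomparable) and $0^\circ=1$, $1^\circ=0$, $a^\circ=a$, $b^\circ=b$; $\{0,1\}$ and $\{0,a,1\}$ denote its subalgebras on those sets. *)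

theory Defs
  imports Main "HOL-Library.FuncSet"
begin

record 'a dm =
  carrier :: "'a set"
  join :: "'a \<Rightarrow> 'a \<Rightarrow> 'a"
  meet :: "'a \<Rightarrow> 'a \<Rightarrow> 'a"
  neg :: "'a \<Rightarrow> 'a"
  zero :: "'a"
  one :: "'a"

definition de_morgan_algebra :: "'a dm \<Rightarrow> bool" where
  "de_morgan_algebra M \<longleftrightarrow>
     (\<forall>x\<in>carrier M. \<forall>y\<in>carrier M. join M x y \<in> carrier M \<and> meet M x y \<in> carrier M) \<and>
     (\<forall>x\<in>carrier M. neg M x \<in> carrier M) \<and>
     zero M \<in> carrier M \<and> one M \<in> carrier M \<and>
     (\<forall>x\<in>carrier M. \<forall>y\<in>carrier M. \<forall>z\<in>carrier M.
        join M (join M x y) z = join M x (join M y z) \<and>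
        meet M (meet M x y) z = meet M x (meet M y z) \<and>
        meet M x (join M y z) = join M (meet M x y) (meet M x z)) \<and>
     (\<forall>x\<in>carrier M. \<forall>y\<in>carrier M.
        join M x y = join M y x \<and> meet M x y = meet M y x \<and>
        join M x (meet M x y) = x \<and> meet M x (join M x y) = x) \<and>
     (\<forall>x\<in>carrier M. join M x (zero M) = x \<and> meet M x (one M) = x) \<and>
     (\<forall>x\<in>carrier M. neg M (neg M x) = x) \<and>
     (\<forall>x\<in>carrier M. \<forall>y\<in>carrier M. neg M (meet M x y) = join M (neg M x) (neg M y)) \<and>
     neg M (one M) = zero M"

definition restrict_dm :: "'a dm \<Rightarrow> 'a set \<Rightarrow> 'a dm" where
  "restrict_dm M S = M\<lparr>carrier := S\<rparr>"

definition boolean_skeleton :: "'a dm \<Rightarrow> 'a dm" where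
  "boolean_skeleton M =
     restrict_dm M {x \<in> carrier M. join M x (neg M x) = one M}"

text \<open>Congruences: equivalence relations on the carrier compatible with all
  operations (nullary operations are trivially compatible).\<close>
definition dm_congruence :: "'a dm \<Rightarrow> ('a \<times> 'a) set \<Rightarrow> bool" where
  "dm_congruence M \<theta> \<longleftrightarrow> equiv (carrier M) \<theta> \<and>
     (\<forall>x y u v. (x, y) \<in> \<theta> \<longrightarrow> (u, v) \<in> \<theta> \<longrightarrow>
        (join M x u, join M y v) \<in> \<theta> \<and> (meet M x u, meet M y v) \<in> \<theta>) \<and>
     (\<forall>x y. (x, y) \<in> \<theta> \<longrightarrow> (neg M x, neg M y) \<in> \<theta>)"

definition perfect_extension :: "'a dm \<Rightarrow> 'a dm \<Rightarrow> bool" where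
  "perfect_extension A B \<longleftrightarrow>
     (\<forall>\<phi>. dm_congruence B \<phi> \<longrightarrow>
        (\<exists>!\<theta>. dm_congruence A \<theta> \<and> \<theta> \<inter> (carrier B \<times> carrier B) = \<phi>))"

definition dm_iso :: "'a dm \<Rightarrow> 'b dm \<Rightarrow> ('a \<Rightarrow> 'b) \<Rightarrow> bool" where
  "dm_iso M N h \<longleftrightarrow> bij_betw h (carrier M) (carrier N) \<and>
     (\<forall>x\<in>carrier M. \<forall>y\<in>carrier M.
        h (join M x y) = join N (h x) (h y) \<and> h (meet M x y) = meet N (h x) (h y)) \<and>
     (\<forall>x\<in>carrier M. h (neg M x) = neg N (h x)) \<and>
     h (zero M) = zero N \<and> h (one M) = one N"

definition dm_isomorphic :: "'a dm \<Rightarrow> 'b dm \<Rightarrow> bool" where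
  "dm_isomorphic M N \<longleftrightarrow> (\<exists>h. dm_iso M N h)"

definition dm_product :: "nat \<Rightarrow> (nat \<Rightarrow> 'a dm) \<Rightarrow> (nat \<Rightarrow> 'a) dm" where
  "dm_product n A =
     \<lparr> carrier = PiE {..<n} (\<lambda>i. carrier (A i)),
       join = (\<lambda>f g. restrict (\<lambda>i. join (A i) (f i) (g i)) {..<n}),
       meet = (\<lambda>f g. restrict (\<lambda>i. meet (A i) (f i) (g i)) {..<n}),
       neg = (\<lambda>f. restrict (\<lambda>i. neg (A i) (f i)) {..<n}),
       zero = restrict (\<lambda>i. zero (A i)) {..<n},
       one = restrict (\<lambda>i. one (A i)) {..<n} \<rparr>"

datatype m1 = E0 | Ea | Eb | E1

fun m1_join :: "m1 \<Rightarrow> m1 \<Rightarrow> m1" where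
  "m1_join E0 y = y"
| "m1_join x E0 = x"
| "m1_join E1 y = E1"
| "m1_join x E1 = E1"
| "m1_join Ea Ea = Ea"
| "m1_join Eb Eb = Eb"
| "m1_join Ea Eb = E1"
| "m1_join Eb Ea = E1"

fun m1_meet :: "m1 \<Rightarrow> m1 \<Rightarrow> m1" where
  "m1_meet E1 y = y"
| "m1_meet x E1 = x"
| "m1_meet E0 y = E0"
| "m1_meet x E0 = E0"
| "m1_meet Ea Ea = Ea"
| "m1_meet Eb Eb = Eb"
| "m1_meet Ea Eb = E0"
| "m1_meet Eb Ea = E0"

fun m1_neg :: "m1 \<Rightarrow> m1" where
  "m1_neg E0 = E1"
| "m1_neg E1 = E0"
| "m1_neg Ea = Ea"
| "m1_neg Eb = Eb"

definition M1 :: "m1 dm" where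
  "M1 = \<lparr> carrier = {E0, Ea, Eb, E1}, join = m1_join, meet = m1_meet,
          neg = m1_neg, zero = E0, one = E1 \<rparr>"

definition M1_two :: "m1 dm" where
  "M1_two = restrict_dm M1 {E0, E1}"

definition M1_three :: "m1 dm" where
  "M1_three = restrict_dm M1 {E0, Ea, E1}"

end

theory Submission
  imports Defs
begin

(*
  A congruence of M restricts to one of its Boolean skeleton B(M); conversely a congruence \<phi> of
  B(M) extends to M by "x \<squnion> e = y \<squnion> e for some e \<in> B(M) with e \<phi> 0", and this extension restricts
  back to \<phi> because Boolean elements are congruent exactly when their symmetric difference is
  congruent to 0.  So M is a perfect extension of B(M) iff every congruence of M is determined by
  the Boolean elements it collapses to 0.

  For finite M with this property, M is the product of the intervals [0, e] over its Boolean atoms e.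
  An atom p \<le> e generates a prime filter and hence a homomorphism x \<mapsto> (p \<le> x, \<not> p \<le> x\<degree>) into M1,
  viewed as the Boolean square with a twisted negation.  The property, applied to the congruence
  "x \<sqinter> p = y \<sqinter> p and x \<squnion> p\<degree> = y \<squnion> p\<degree>", makes this homomorphism injective on [0, e], so every
  factor is a subalgebra of M1 containing 0 and 1.  It cannot be {0,b,1}: either p \<le> p\<degree> and p
  maps to a, or p maps to 1 like e, which forces p = e and [0, e] = {0, e}.

  Conversely {0,1}, {0,a,1} and M1 are simple, and a congruence of a finite product of simple
  algebras collapses every factor on which two related elements differ, so the indicator of these
  factors is a Boolean witness.
*)

section \<open>Congruences and isomorphisms\<close>

lemma carrier_boolean_skeleton:
  "carrier (boolean_skeleton N) = {x \<in> carrier N. join N x (neg N x) = one N}"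
  by (simp add: boolean_skeleton_def restrict_dm_def)

lemma boolean_skeleton_simps [simp]:
  "join (boolean_skeleton N) = join N" "meet (boolean_skeleton N) = meet N"
  "neg (boolean_skeleton N) = neg N" "zero (boolean_skeleton N) = zero N"
  "one (boolean_skeleton N) = one N"
  by (simp_all add: boolean_skeleton_def restrict_dm_def)

lemma dm_congruenceI:
  assumes "\<theta> \<subseteq> carrier N \<times> carrier N"
    and "\<And>x. x \<in> carrier N \<Longrightarrow> (x, x) \<in> \<theta>"
    and "\<And>x y. (x, y) \<in> \<theta> \<Longrightarrow> (y, x) \<in> \<theta>"
    and "\<And>x y z. (x, y) \<in> \<theta> \<Longrightarrow> (y, z) \<in> \<theta> \<Longrightarrow> (x, z) \<in> \<theta>"
    and "\<And>x y u v. (x, y) \<in> \<theta> \<Longrightarrow> (u, v) \<in> \<theta> \<Longrightarrow> (join N x u, join N y v) \<in> \<theta>"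
    and "\<And>x y u v. (x, y) \<in> \<theta> \<Longrightarrow> (u, v) \<in> \<theta> \<Longrightarrow> (meet N x u, meet N y v) \<in> \<theta>"
    and "\<And>x y. (x, y) \<in> \<theta> \<Longrightarrow> (neg N x, neg N y) \<in> \<theta>"
  shows "dm_congruence N \<theta>"
proof -
  have "equiv (carrier N) \<theta>"
    by (rule equivI, fact, rule refl_onI, fact, rule symI, fact, rule transI, fact)
  then show ?thesis
    unfolding dm_congruence_def using assms(5-7) by blast
qed

context
  fixes N :: "'a dm" and \<theta> :: "('a \<times> 'a) set"
  assumes cong: "dm_congruence N \<theta>"
begin

lemma dm_congruence_subset: "\<theta> \<subseteq> carrier N \<times> carrier N"
  using cong by (simp add: dm_congruence_def equiv_def refl_on_def)

lemma dm_congruence_refl: "x \<in> carrier N \<Longrightarrow> (x, x) \<in> \<theta>"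
  using cong by (simp add: dm_congruence_def equiv_def refl_on_def)

lemma dm_congruence_sym: "(x, y) \<in> \<theta> \<Longrightarrow> (y, x) \<in> \<theta>"
  using cong by (auto simp: dm_congruence_def equiv_def dest: symD)

lemma dm_congruence_trans: "(x, y) \<in> \<theta> \<Longrightarrow> (y, z) \<in> \<theta> \<Longrightarrow> (x, z) \<in> \<theta>"
  using cong by (auto simp: dm_congruence_def equiv_def dest: transD)

lemma dm_congruence_join: "(x, y) \<in> \<theta> \<Longrightarrow> (u, v) \<in> \<theta> \<Longrightarrow> (join N x u, join N y v) \<in> \<theta>"
  and dm_congruence_meet: "(x, y) \<in> \<theta> \<Longrightarrow> (u, v) \<in> \<theta> \<Longrightarrow> (meet N x u, meet N y v) \<in> \<theta>"
  and dm_congruence_neg: "(x, y) \<in> \<theta> \<Longrightarrow> (neg N x, neg N y) \<in> \<theta>"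
  using cong unfolding dm_congruence_def by blast+

end

definition ideal_congruence :: "'a dm \<Rightarrow> 'a set \<Rightarrow> ('a \<times> 'a) set" where
  "ideal_congruence N I =
     {(x, y). x \<in> carrier N \<and> y \<in> carrier N \<and> (\<exists>e\<in>I. join N x e = join N y e)}"

definition boolean_kernel :: "'a dm \<Rightarrow> ('a \<times> 'a) set \<Rightarrow> 'a set" where
  "boolean_kernel N \<theta> = {e \<in> carrier (boolean_skeleton N). (e, zero N) \<in> \<theta>}"

text \<open>The reverse inclusion holds in every de Morgan algebra.\<close>
definition boolean_determined :: "'a dm \<Rightarrow> bool" where
  "boolean_determined N \<longleftrightarrow>
     (\<forall>\<theta>. dm_congruence N \<theta> \<longrightarrow> \<theta> \<subseteq> ideal_congruence N (boolean_kernel N \<theta>))"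

lemma ideal_congruenceI:
  "x \<in> carrier N \<Longrightarrow> y \<in> carrier N \<Longrightarrow> e \<in> I \<Longrightarrow> join N x e = join N y e \<Longrightarrow>
    (x, y) \<in> ideal_congruence N I"
  unfolding ideal_congruence_def by blast

lemma ideal_congruenceE:
  assumes "(x, y) \<in> ideal_congruence N I"
  obtains e where "x \<in> carrier N" "y \<in> carrier N" "e \<in> I" "join N x e = join N y e"
  using assms unfolding ideal_congruence_def by blast

lemma ideal_congruence_subset:
  assumes cong: "dm_congruence N \<theta>" and kernel: "\<And>e. e \<in> I \<Longrightarrow> (e, zero N) \<in> \<theta>"
    and join_zero: "\<And>x. x \<in> carrier N \<Longrightarrow> join N x (zero N) = x"
  shows "ideal_congruence N I \<subseteq> \<theta>"
proof
  fix p assume "p \<in> ideal_congruence N I"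
  then obtain x y e where p: "p = (x, y)" and xy: "x \<in> carrier N" "y \<in> carrier N"
    and e: "e \<in> I" "join N x e = join N y e"
    by (auto simp: ideal_congruence_def)
  have "(join N x (zero N), join N x e) \<in> \<theta>"
    using cong xy kernel[OF e(1)] by (blast intro: dm_congruence_join dm_congruence_refl dm_congruence_sym)
  moreover have "(join N y e, join N y (zero N)) \<in> \<theta>"
    using cong xy kernel[OF e(1)] by (blast intro: dm_congruence_join dm_congruence_refl)
  ultimately show "p \<in> \<theta>"
    using p xy e(2) join_zero cong by (metis dm_congruence_trans)
qed

lemma dm_congruence_iso_image:
  assumes iso: "dm_iso M P h" and \<theta>: "dm_congruence M \<theta>"
  shows "dm_congruence P (map_prod h h ` \<theta>)"
proof -
  have bij: "bij_betw h (carrier M) (carrier P)"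
    and hom_join: "\<And>x y. x \<in> carrier M \<Longrightarrow> y \<in> carrier M \<Longrightarrow> h (join M x y) = join P (h x) (h y)"
    and hom_meet: "\<And>x y. x \<in> carrier M \<Longrightarrow> y \<in> carrier M \<Longrightarrow> h (meet M x y) = meet P (h x) (h y)"
    and hom_neg: "\<And>x. x \<in> carrier M \<Longrightarrow> h (neg M x) = neg P (h x)"
    using iso by (simp_all add: dm_iso_def)
  have sub: "\<theta> \<subseteq> carrier M \<times> carrier M"
    using \<theta> by (rule dm_congruence_subset)
  have image_pair: "(h x, h y) \<in> map_prod h h ` \<theta>" if "(x, y) \<in> \<theta>" for x y
    using that by force
  show ?thesis
  proof (rule dm_congruenceI)
    show "map_prod h h ` \<theta> \<subseteq> carrier P \<times> carrier P"
      using sub bij by (auto simp: bij_betw_def)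
    show "(X, X) \<in> map_prod h h ` \<theta>" if X: "X \<in> carrier P" for X
    proof -
      obtain x where "x \<in> carrier M" "X = h x"
        using X bij by (auto simp: bij_betw_def)
      then show ?thesis
        using image_pair dm_congruence_refl[OF \<theta>] by simp
    qed
    show "(Y, X) \<in> map_prod h h ` \<theta>" if "(X, Y) \<in> map_prod h h ` \<theta>" for X Y
      using that image_pair dm_congruence_sym[OF \<theta>] by auto
    show "(X, Z) \<in> map_prod h h ` \<theta>"
      if rel: "(X, Y) \<in> map_prod h h ` \<theta>" "(Y, Z) \<in> map_prod h h ` \<theta>" for X Y Z
    proof -
      obtain a b b' c where "(a, b) \<in> \<theta>" "(b', c) \<in> \<theta>" "X = h a" "Y = h b" "Y = h b'" "Z = h c"
        using rel by auto
      moreover have "b = b'"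
        using calculation sub bij by (auto simp: bij_betw_def inj_on_def)
      ultimately show ?thesis
        using image_pair dm_congruence_trans[OF \<theta>] by blast
    qed
    have binop: "(Op X U, Op Y V) \<in> map_prod h h ` \<theta>"
      if rel: "(X, Y) \<in> map_prod h h ` \<theta>" "(U, V) \<in> map_prod h h ` \<theta>"
        and hom: "\<And>a c. a \<in> carrier M \<Longrightarrow> c \<in> carrier M \<Longrightarrow> h (op a c) = Op (h a) (h c)"
        and compat: "\<And>a b c d. (a, b) \<in> \<theta> \<Longrightarrow> (c, d) \<in> \<theta> \<Longrightarrow> (op a c, op b d) \<in> \<theta>"
      for Op op X Y U V
    proof -
      obtain a b c d where ab: "(a, b) \<in> \<theta>" and cd: "(c, d) \<in> \<theta>"
        and XYUV: "X = h a" "Y = h b" "U = h c" "V = h d"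
        using rel by auto
      have "a \<in> carrier M" "b \<in> carrier M" "c \<in> carrier M" "d \<in> carrier M"
        using ab cd sub by blast+
      then show ?thesis
        using image_pair[OF compat[OF ab cd]] XYUV by (simp add: hom)
    qed
    show "(join P X U, join P Y V) \<in> map_prod h h ` \<theta>"
      if "(X, Y) \<in> map_prod h h ` \<theta>" "(U, V) \<in> map_prod h h ` \<theta>" for X Y U V
      using that hom_join dm_congruence_join[OF \<theta>] by (rule binop)
    show "(meet P X U, meet P Y V) \<in> map_prod h h ` \<theta>"
      if "(X, Y) \<in> map_prod h h ` \<theta>" "(U, V) \<in> map_prod h h ` \<theta>" for X Y U V
      using that hom_meet dm_congruence_meet[OF \<theta>] by (rule binop)
    show "(neg P X, neg P Y) \<in> map_prod h h ` \<theta>" if rel: "(X, Y) \<in> map_prod h h ` \<theta>" for X Y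
    proof -
      obtain a b where ab: "(a, b) \<in> \<theta>" and XY: "X = h a" "Y = h b"
        using rel by auto
      have "a \<in> carrier M" "b \<in> carrier M"
        using ab sub by blast+
      then have "neg P X = h (neg M a)" "neg P Y = h (neg M b)"
        using XY by (simp_all add: hom_neg)
      then show ?thesis
        using image_pair[OF dm_congruence_neg[OF \<theta> ab]] by simp
    qed
  qed
qed

lemma dm_iso_comp:
  assumes "dm_iso M N f" "dm_iso N P g"
  shows "dm_iso M P (g \<circ> f)"
proof -
  have "f x \<in> carrier N" if "x \<in> carrier M" for x
    using assms(1) that by (auto simp: dm_iso_def bij_betw_def)
  then show ?thesis
    using assms by (auto simp: dm_iso_def intro: bij_betw_trans)
qed

lemma dm_iso_product:
  assumes iso: "\<And>i. i < n \<Longrightarrow> dm_iso (A i) (A' i) (h i)"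
  shows "dm_iso (dm_product n A) (dm_product n A') (\<lambda>F. \<lambda>i\<in>{..<n}. h i (F i))"
proof -
  have bij: "bij_betw (h i) (carrier (A i)) (carrier (A' i))" if "i < n" for i
    using iso[OF that] by (simp add: dm_iso_def)
  have maps: "h i x \<in> carrier (A' i)" if "i < n" "x \<in> carrier (A i)" for i x
    using bij[OF that(1)] that(2) by (auto simp: bij_betw_def)
  let ?g = "\<lambda>G. \<lambda>i\<in>{..<n}. inv_into (carrier (A i)) (h i) (G i)"
  have "bij_betw (\<lambda>F. \<lambda>i\<in>{..<n}. h i (F i)) (carrier (dm_product n A)) (carrier (dm_product n A'))"
  proof (rule bij_betw_byWitness[where f' = ?g])
    show "\<forall>F\<in>carrier (dm_product n A). ?g (\<lambda>i\<in>{..<n}. h i (F i)) = F"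
      using bij by (auto simp: dm_product_def PiE_iff bij_betw_def intro!: extensionalityI[of _ "{..<n}"])
    show "\<forall>G\<in>carrier (dm_product n A'). (\<lambda>i\<in>{..<n}. h i (?g G i)) = G"
      using bij by (auto simp: dm_product_def PiE_iff bij_betw_def f_inv_into_f
        intro!: extensionalityI[of _ "{..<n}"])
    show "(\<lambda>F. \<lambda>i\<in>{..<n}. h i (F i)) ` carrier (dm_product n A) \<subseteq> carrier (dm_product n A')"
      using maps by (auto simp: dm_product_def PiE_iff)
    show "?g ` carrier (dm_product n A') \<subseteq> carrier (dm_product n A)"
      using bij by (auto simp: dm_product_def PiE_iff bij_betw_def inv_into_into)
  qed
  then show ?thesis
    using iso by (auto simp: dm_iso_def dm_product_def PiE_iff intro!: restrict_ext)
qed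

section \<open>De Morgan algebras\<close>

locale de_morgan =
  fixes M :: "'a dm"
  assumes de_morgan_algebra: "de_morgan_algebra M"
begin

abbreviation C where "C \<equiv> carrier M"
abbreviation B where "B \<equiv> carrier (boolean_skeleton M)"
abbreviation join_M (infixl "\<squnion>" 65) where "x \<squnion> y \<equiv> join M x y"
abbreviation meet_M (infixl "\<sqinter>" 70) where "x \<sqinter> y \<equiv> meet M x y"
abbreviation neg_M ("_\<degree>" [1000] 1000) where "x\<degree> \<equiv> neg M x"
abbreviation zero_M ("\<zero>") where "\<zero> \<equiv> zero M"
abbreviation one_M ("\<one>") where "\<one> \<equiv> one M"

lemma join_closed [simp]: "x \<in> C \<Longrightarrow> y \<in> C \<Longrightarrow> x \<squnion> y \<in> C"
  and meet_closed [simp]: "x \<in> C \<Longrightarrow> y \<in> C \<Longrightarrow> x \<sqinter> y \<in> C"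
  and neg_closed [simp]: "x \<in> C \<Longrightarrow> x\<degree> \<in> C"
  and zero_closed [simp]: "\<zero> \<in> C"
  and one_closed [simp]: "\<one> \<in> C"
  and join_assoc: "x \<in> C \<Longrightarrow> y \<in> C \<Longrightarrow> z \<in> C \<Longrightarrow> x \<squnion> y \<squnion> z = x \<squnion> (y \<squnion> z)"
  and meet_assoc: "x \<in> C \<Longrightarrow> y \<in> C \<Longrightarrow> z \<in> C \<Longrightarrow> x \<sqinter> y \<sqinter> z = x \<sqinter> (y \<sqinter> z)"
  and meet_join_distrib: "x \<in> C \<Longrightarrow> y \<in> C \<Longrightarrow> z \<in> C \<Longrightarrow> x \<sqinter> (y \<squnion> z) = x \<sqinter> y \<squnion> x \<sqinter> z"
  and join_comm: "x \<in> C \<Longrightarrow> y \<in> C \<Longrightarrow> x \<squnion> y = y \<squnion> x"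
  and meet_comm: "x \<in> C \<Longrightarrow> y \<in> C \<Longrightarrow> x \<sqinter> y = y \<sqinter> x"
  and join_meet_absorb: "x \<in> C \<Longrightarrow> y \<in> C \<Longrightarrow> x \<squnion> (x \<sqinter> y) = x"
  and meet_join_absorb: "x \<in> C \<Longrightarrow> y \<in> C \<Longrightarrow> x \<sqinter> (x \<squnion> y) = x"
  and join_zero [simp]: "x \<in> C \<Longrightarrow> x \<squnion> \<zero> = x"
  and meet_one [simp]: "x \<in> C \<Longrightarrow> x \<sqinter> \<one> = x"
  and neg_neg [simp]: "x \<in> C \<Longrightarrow> x\<degree>\<degree> = x"
  and neg_meet: "x \<in> C \<Longrightarrow> y \<in> C \<Longrightarrow> (x \<sqinter> y)\<degree> = x\<degree> \<squnion> y\<degree>"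
  and neg_one [simp]: "\<one>\<degree> = \<zero>"
  using de_morgan_algebra unfolding de_morgan_algebra_def by blast+

lemma neg_zero [simp]: "\<zero>\<degree> = \<one>"
  using neg_neg[OF one_closed] by simp

lemma neg_join: "x \<in> C \<Longrightarrow> y \<in> C \<Longrightarrow> (x \<squnion> y)\<degree> = x\<degree> \<sqinter> y\<degree>"
  using neg_meet[of "x\<degree>" "y\<degree>"] neg_neg[of "x\<degree> \<sqinter> y\<degree>"] by simp

lemma join_idem [simp]: "x \<in> C \<Longrightarrow> x \<squnion> x = x"
  using join_meet_absorb[of x "x \<squnion> x"] meet_join_absorb[of x x] by simp

lemma meet_idem [simp]: "x \<in> C \<Longrightarrow> x \<sqinter> x = x"
  using meet_join_absorb[of x "x \<sqinter> x"] join_meet_absorb[of x x] by simp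

lemma zero_join [simp]: "x \<in> C \<Longrightarrow> \<zero> \<squnion> x = x"
  using join_comm[of \<zero> x] by simp

lemma one_meet [simp]: "x \<in> C \<Longrightarrow> \<one> \<sqinter> x = x"
  using meet_comm[of \<one> x] by simp

lemma zero_meet [simp]: "x \<in> C \<Longrightarrow> \<zero> \<sqinter> x = \<zero>"
  using meet_join_absorb[of \<zero> x] by simp

lemma meet_zero [simp]: "x \<in> C \<Longrightarrow> x \<sqinter> \<zero> = \<zero>"
  using meet_comm[of x \<zero>] by simp

lemma one_join [simp]: "x \<in> C \<Longrightarrow> \<one> \<squnion> x = \<one>"
  using join_meet_absorb[of \<one> x] by simp

lemma join_one [simp]: "x \<in> C \<Longrightarrow> x \<squnion> \<one> = \<one>"
  using join_comm[of x \<one>] by simp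

lemma join_meet_distrib: "x \<in> C \<Longrightarrow> y \<in> C \<Longrightarrow> z \<in> C \<Longrightarrow> x \<squnion> y \<sqinter> z = (x \<squnion> y) \<sqinter> (x \<squnion> z)"
proof -
  assume xyz: "x \<in> C" "y \<in> C" "z \<in> C"
  have "(x \<squnion> y) \<sqinter> (x \<squnion> z) = (x \<squnion> y) \<sqinter> x \<squnion> (x \<squnion> y) \<sqinter> z"
    using xyz by (simp add: meet_join_distrib)
  also have "\<dots> = x \<squnion> (x \<sqinter> z \<squnion> y \<sqinter> z)"
    using xyz meet_comm[of "x \<squnion> y" x] meet_join_absorb[of x y] meet_comm[of "x \<squnion> y" z]
      meet_join_distrib[of z x y] meet_comm[of z x] meet_comm[of z y] by simp
  also have "\<dots> = x \<squnion> y \<sqinter> z"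
    using xyz join_assoc[of x "x \<sqinter> z" "y \<sqinter> z"] join_meet_absorb[of x z] by simp
  finally show ?thesis by simp
qed

lemma meet_join_distrib_right: "x \<in> C \<Longrightarrow> y \<in> C \<Longrightarrow> z \<in> C \<Longrightarrow> (y \<squnion> z) \<sqinter> x = y \<sqinter> x \<squnion> z \<sqinter> x"
  using meet_join_distrib[of x y z] meet_comm[of x "y \<squnion> z"] meet_comm[of x y] meet_comm[of x z] by simp

lemma join_meet_distrib_right: "x \<in> C \<Longrightarrow> y \<in> C \<Longrightarrow> z \<in> C \<Longrightarrow> y \<sqinter> z \<squnion> x = (y \<squnion> x) \<sqinter> (z \<squnion> x)"
  using join_meet_distrib[of x y z] join_comm[of x "y \<sqinter> z"] join_comm[of x y] join_comm[of x z] by simp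

lemma join_left_comm: "x \<in> C \<Longrightarrow> y \<in> C \<Longrightarrow> z \<in> C \<Longrightarrow> x \<squnion> (y \<squnion> z) = y \<squnion> (x \<squnion> z)"
  using join_assoc[of x y z] join_assoc[of y x z] join_comm[of x y] by simp

lemma meet_left_comm: "x \<in> C \<Longrightarrow> y \<in> C \<Longrightarrow> z \<in> C \<Longrightarrow> x \<sqinter> (y \<sqinter> z) = y \<sqinter> (x \<sqinter> z)"
  using meet_assoc[of x y z] meet_assoc[of y x z] meet_comm[of x y] by simp


definition le :: "'a \<Rightarrow> 'a \<Rightarrow> bool" (infix "\<sqsubseteq>" 50) where
  "x \<sqsubseteq> y \<longleftrightarrow> x \<sqinter> y = x"

lemma le_iff_join: "x \<in> C \<Longrightarrow> y \<in> C \<Longrightarrow> x \<sqsubseteq> y \<longleftrightarrow> x \<squnion> y = y"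
  unfolding le_def using join_meet_absorb[of y x] meet_join_absorb[of x y] join_comm[of x y]
    meet_comm[of x y] by metis

lemma le_refl [simp]: "x \<in> C \<Longrightarrow> x \<sqsubseteq> x"
  by (simp add: le_def)

lemma le_antisym: "x \<in> C \<Longrightarrow> y \<in> C \<Longrightarrow> x \<sqsubseteq> y \<Longrightarrow> y \<sqsubseteq> x \<Longrightarrow> x = y"
  unfolding le_def using meet_comm[of x y] by simp

lemma le_trans: "x \<in> C \<Longrightarrow> y \<in> C \<Longrightarrow> z \<in> C \<Longrightarrow> x \<sqsubseteq> y \<Longrightarrow> y \<sqsubseteq> z \<Longrightarrow> x \<sqsubseteq> z"
  unfolding le_def using meet_assoc[of x y z] by simp

lemma zero_le [simp]: "x \<in> C \<Longrightarrow> \<zero> \<sqsubseteq> x"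
  and le_one [simp]: "x \<in> C \<Longrightarrow> x \<sqsubseteq> \<one>"
  by (simp_all add: le_def)

lemma le_zero_iff: "x \<in> C \<Longrightarrow> x \<sqsubseteq> \<zero> \<longleftrightarrow> x = \<zero>"
  by (auto simp: le_def)

lemma meet_le_left: "x \<in> C \<Longrightarrow> y \<in> C \<Longrightarrow> x \<sqinter> y \<sqsubseteq> x"
  unfolding le_def using meet_assoc[of x y x] meet_comm[of y x] meet_assoc[of x x y] by simp

lemma meet_le_right: "x \<in> C \<Longrightarrow> y \<in> C \<Longrightarrow> x \<sqinter> y \<sqsubseteq> y"
  using meet_le_left[of y x] meet_comm[of x y] by simp

lemma le_meet_iff: "x \<in> C \<Longrightarrow> y \<in> C \<Longrightarrow> z \<in> C \<Longrightarrow> z \<sqsubseteq> x \<sqinter> y \<longleftrightarrow> z \<sqsubseteq> x \<and> z \<sqsubseteq> y"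
  using le_trans[OF _ _ _ _ meet_le_left] le_trans[OF _ _ _ _ meet_le_right] meet_assoc[of z x y]
  unfolding le_def by (metis meet_closed)

lemma join_upper_left: "x \<in> C \<Longrightarrow> y \<in> C \<Longrightarrow> x \<sqsubseteq> x \<squnion> y"
  by (simp add: le_def meet_join_absorb)

lemma join_upper_right: "x \<in> C \<Longrightarrow> y \<in> C \<Longrightarrow> y \<sqsubseteq> x \<squnion> y"
  using join_upper_left[of y x] join_comm[of x y] by simp

lemma boolean_iff: "x \<in> B \<longleftrightarrow> x \<in> C \<and> x \<squnion> x\<degree> = \<one>"
  by (simp add: carrier_boolean_skeleton)

lemma boolean_closed: "x \<in> B \<Longrightarrow> x \<in> C"
  by (simp add: boolean_iff)

lemma boolean_meet_neg: "x \<in> B \<Longrightarrow> x \<sqinter> x\<degree> = \<zero>"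
  using neg_join[of x "x\<degree>"] meet_comm[of "x\<degree>" x] by (simp add: boolean_iff)

lemma zero_boolean [simp]: "\<zero> \<in> B"
  by (simp add: boolean_iff)

lemma neg_boolean: "x \<in> B \<Longrightarrow> x\<degree> \<in> B"
  using join_comm[of x "x\<degree>"] by (simp add: boolean_iff)

lemma join_boolean: "x \<in> B \<Longrightarrow> y \<in> B \<Longrightarrow> x \<squnion> y \<in> B"
proof -
  assume "x \<in> B" "y \<in> B"
  then have xy: "x \<in> C" "y \<in> C" and x: "x \<squnion> x\<degree> = \<one>" and y: "y \<squnion> y\<degree> = \<one>"
    by (simp_all add: boolean_iff)
  have "x \<squnion> y \<squnion> (x \<squnion> y)\<degree> = (x \<squnion> y \<squnion> x\<degree>) \<sqinter> (x \<squnion> y \<squnion> y\<degree>)"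
    using xy by (simp add: neg_join join_meet_distrib)
  also have "x \<squnion> y \<squnion> x\<degree> = \<one>"
    using x xy join_assoc[of x y "x\<degree>"] join_left_comm[of y x "x\<degree>"] by simp
  also have "x \<squnion> y \<squnion> y\<degree> = \<one>"
    using y xy join_assoc[of x y "y\<degree>"] by simp
  finally show ?thesis using xy by (simp add: boolean_iff)
qed

lemma meet_boolean: "x \<in> B \<Longrightarrow> y \<in> B \<Longrightarrow> x \<sqinter> y \<in> B"
  using join_boolean[OF neg_boolean neg_boolean, of x y] neg_boolean[of "x\<degree> \<squnion> y\<degree>"]
    neg_join[of "x\<degree>" "y\<degree>"] by (simp add: boolean_iff)

lemma boolean_kernel_restrict: "boolean_kernel M (\<theta> \<inter> B \<times> B) = boolean_kernel M \<theta>"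
  by (auto simp: boolean_kernel_def)

lemma dm_congruence_restrict_boolean:
  assumes "dm_congruence M \<theta>"
  shows "dm_congruence (boolean_skeleton M) (\<theta> \<inter> B \<times> B)"
proof (rule dm_congruenceI)
  show "\<theta> \<inter> B \<times> B \<subseteq> carrier (boolean_skeleton M) \<times> carrier (boolean_skeleton M)"
    by blast
qed (use assms in \<open>auto intro: dm_congruence_refl
  dm_congruence_sym dm_congruence_trans dm_congruence_join dm_congruence_meet dm_congruence_neg
  join_boolean meet_boolean neg_boolean boolean_closed\<close>)

lemma join_join_distrib: "x \<in> C \<Longrightarrow> y \<in> C \<Longrightarrow> z \<in> C \<Longrightarrow> (x \<squnion> y) \<squnion> z = (x \<squnion> z) \<squnion> (y \<squnion> z)"
  using join_assoc[of x z "y \<squnion> z"] join_left_comm[of z y z] join_assoc[of y z z] join_assoc[of x y z]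
  by simp

lemma neg_join_boolean: "e \<in> B \<Longrightarrow> x \<in> C \<Longrightarrow> (x \<squnion> e)\<degree> \<squnion> e = x\<degree> \<squnion> e"
proof -
  assume e: "e \<in> B" and x: "x \<in> C"
  have eC: "e \<in> C" using e by (rule boolean_closed)
  have "(x \<squnion> e)\<degree> \<squnion> e = (x\<degree> \<squnion> e) \<sqinter> (e\<degree> \<squnion> e)"
    using x eC by (simp add: neg_join join_meet_distrib_right)
  also have "e\<degree> \<squnion> e = \<one>"
    using e eC join_comm[of e "e\<degree>"] by (simp add: boolean_iff)
  finally show ?thesis using x eC by simp
qed

context
  fixes I
  assumes ideal_boolean: "I \<subseteq> B" and ideal_zero: "\<zero> \<in> I"
    and ideal_join: "\<And>e f. e \<in> I \<Longrightarrow> f \<in> I \<Longrightarrow> e \<squnion> f \<in> I"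
begin

lemma ideal_congruence_common_witness:
  assumes "(x, y) \<in> ideal_congruence M I" and "(u, v) \<in> ideal_congruence M I"
  obtains g where "g \<in> I" "g \<in> C" "x \<squnion> g = y \<squnion> g" "u \<squnion> g = v \<squnion> g"
proof -
  obtain e f where ef: "e \<in> I" "f \<in> I" "x \<squnion> e = y \<squnion> e" "u \<squnion> f = v \<squnion> f"
    and C: "x \<in> C" "y \<in> C" "u \<in> C" "v \<in> C"
    using assms by (elim ideal_congruenceE)
  then have efC: "e \<in> C" "f \<in> C"
    using ideal_boolean boolean_closed by auto
  show ?thesis
  proof
    show "e \<squnion> f \<in> I" "e \<squnion> f \<in> C"
      using ef efC ideal_join by simp_all
    show "x \<squnion> (e \<squnion> f) = y \<squnion> (e \<squnion> f)"
      using ef C efC join_assoc[of x e f] join_assoc[of y e f] by simp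
    show "u \<squnion> (e \<squnion> f) = v \<squnion> (e \<squnion> f)"
      using ef C efC join_left_comm[of u e f] join_left_comm[of v e f] by simp
  qed
qed

lemma dm_congruence_ideal_congruence: "dm_congruence M (ideal_congruence M I)"
proof (rule dm_congruenceI)
  show "ideal_congruence M I \<subseteq> C \<times> C"
    by (auto elim: ideal_congruenceE)
  show "(x, x) \<in> ideal_congruence M I" if "x \<in> C" for x
    using that ideal_zero by (intro ideal_congruenceI) simp_all
  show "(y, x) \<in> ideal_congruence M I" if "(x, y) \<in> ideal_congruence M I" for x y
  proof (rule ideal_congruenceE[OF that])
    fix e assume "x \<in> C" "y \<in> C" "e \<in> I" "x \<squnion> e = y \<squnion> e"
    then show ?thesis
      using ideal_congruenceI[of y M x e] by simp
  qed
  show "(x, z) \<in> ideal_congruence M I"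
    if "(x, y) \<in> ideal_congruence M I" "(y, z) \<in> ideal_congruence M I" for x y z
  proof (rule ideal_congruence_common_witness[OF that])
    fix g assume "g \<in> I" "g \<in> C" "x \<squnion> g = y \<squnion> g" "y \<squnion> g = z \<squnion> g"
    moreover have "x \<in> C" "z \<in> C"
      using that by (auto elim: ideal_congruenceE)
    ultimately show ?thesis
      by (intro ideal_congruenceI) simp_all
  qed
  show "(x \<squnion> u, y \<squnion> v) \<in> ideal_congruence M I"
    if "(x, y) \<in> ideal_congruence M I" "(u, v) \<in> ideal_congruence M I" for x y u v
  proof (rule ideal_congruence_common_witness[OF that])
    fix g assume g: "g \<in> I" "g \<in> C" and eq: "x \<squnion> g = y \<squnion> g" "u \<squnion> g = v \<squnion> g"
    have C: "x \<in> C" "y \<in> C" "u \<in> C" "v \<in> C"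
      using that by (auto elim: ideal_congruenceE)
    have "x \<squnion> u \<squnion> g = (x \<squnion> g) \<squnion> (u \<squnion> g)"
      using C g join_join_distrib[of x u g] by simp
    also have "\<dots> = y \<squnion> v \<squnion> g"
      unfolding eq using C g join_join_distrib[of y v g] by simp
    finally show ?thesis
      using C g by (intro ideal_congruenceI) simp_all
  qed
  show "(x \<sqinter> u, y \<sqinter> v) \<in> ideal_congruence M I"
    if "(x, y) \<in> ideal_congruence M I" "(u, v) \<in> ideal_congruence M I" for x y u v
  proof (rule ideal_congruence_common_witness[OF that])
    fix g assume g: "g \<in> I" "g \<in> C" and eq: "x \<squnion> g = y \<squnion> g" "u \<squnion> g = v \<squnion> g"
    have C: "x \<in> C" "y \<in> C" "u \<in> C" "v \<in> C"
      using that by (auto elim: ideal_congruenceE)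
    have "x \<sqinter> u \<squnion> g = (x \<squnion> g) \<sqinter> (u \<squnion> g)"
      using C g join_meet_distrib_right[of g x u] by simp
    also have "\<dots> = y \<sqinter> v \<squnion> g"
      unfolding eq using C g join_meet_distrib_right[of g y v] by simp
    finally show ?thesis
      using C g by (intro ideal_congruenceI) simp_all
  qed
  show "(x\<degree>, y\<degree>) \<in> ideal_congruence M I" if "(x, y) \<in> ideal_congruence M I" for x y
  proof (rule ideal_congruenceE[OF that])
    fix e assume C: "x \<in> C" "y \<in> C" and e: "e \<in> I" and eq: "x \<squnion> e = y \<squnion> e"
    then have "e \<in> B"
      using ideal_boolean by blast
    then have "x\<degree> \<squnion> e = y\<degree> \<squnion> e"
      using neg_join_boolean[of e x] neg_join_boolean[of e y] C eq by simp
    then show ?thesis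
      using C e by (intro ideal_congruenceI) simp_all
  qed
qed

end

lemma boolean_kernel_ideal:
  assumes "dm_congruence (boolean_skeleton M) \<phi>"
  shows "boolean_kernel M \<phi> \<subseteq> B" "\<zero> \<in> boolean_kernel M \<phi>"
    and "\<And>e f. e \<in> boolean_kernel M \<phi> \<Longrightarrow> f \<in> boolean_kernel M \<phi> \<Longrightarrow> e \<squnion> f \<in> boolean_kernel M \<phi>"
  using assms dm_congruence_refl[OF assms zero_boolean] dm_congruence_join[OF assms, of _ \<zero> _ \<zero>]
  by (auto simp: boolean_kernel_def join_boolean)

text \<open>The symmetric difference of Boolean elements witnesses their congruence.\<close>
lemma boolean_pair_in_ideal_congruence:
  assumes \<phi>: "dm_congruence (boolean_skeleton M) \<phi>" and xy: "(x, y) \<in> \<phi>"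
  shows "(x, y) \<in> ideal_congruence M (boolean_kernel M \<phi>)"
proof -
  have "x \<in> B" "y \<in> B"
    using dm_congruence_subset[OF \<phi>] xy by auto
  then have B: "x\<degree> \<in> B" "y\<degree> \<in> B"
    by (simp_all add: neg_boolean)
  have C: "x \<in> C" "y \<in> C" "x\<degree> \<in> C" "y\<degree> \<in> C" and x1: "x \<squnion> x\<degree> = \<one>" and y1: "y \<squnion> y\<degree> = \<one>"
    using \<open>x \<in> B\<close> \<open>y \<in> B\<close> by (simp_all add: boolean_iff)
  define d where "d = x \<sqinter> y\<degree> \<squnion> x\<degree> \<sqinter> y"
  have "(d, y \<sqinter> y\<degree> \<squnion> x\<degree> \<sqinter> x) \<in> \<phi>"
    unfolding d_def using dm_congruence_join[OF \<phi> dm_congruence_meet[OF \<phi> xy dm_congruence_refl[OF \<phi> B(2)]]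
      dm_congruence_meet[OF \<phi> dm_congruence_refl[OF \<phi> B(1)] dm_congruence_sym[OF \<phi> xy]]]
    by simp
  then have "(d, \<zero>) \<in> \<phi>"
    using \<open>x \<in> B\<close> \<open>y \<in> B\<close> boolean_meet_neg meet_comm[of "x\<degree>" x] C by simp
  moreover have "d \<in> B"
    unfolding d_def using \<open>x \<in> B\<close> \<open>y \<in> B\<close> B by (simp add: join_boolean meet_boolean)
  moreover have "x \<squnion> d = y \<squnion> d"
  proof -
    have join_d: "a \<squnion> (a \<sqinter> b\<degree> \<squnion> a\<degree> \<sqinter> b) = a \<squnion> b"
      if "a \<in> C" "b \<in> C" "a \<squnion> a\<degree> = \<one>" for a b
      using that join_assoc[of a "a \<sqinter> b\<degree>" "a\<degree> \<sqinter> b"] join_meet_absorb[of a "b\<degree>"]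
        join_meet_distrib[of a "a\<degree>" b] by simp
    have "d = y \<sqinter> x\<degree> \<squnion> y\<degree> \<sqinter> x"
      unfolding d_def using C join_comm[of "x \<sqinter> y\<degree>" "x\<degree> \<sqinter> y"] meet_comm[of x "y\<degree>"]
        meet_comm[of "x\<degree>" y] by simp
    then show ?thesis
      using join_d[of x y] join_d[of y x] C x1 y1 join_comm[of x y] unfolding d_def by simp
  qed
  ultimately show ?thesis
    using C by (auto simp: ideal_congruence_def boolean_kernel_def)
qed

lemma ideal_congruence_boolean_kernel_restrict:
  assumes \<phi>: "dm_congruence (boolean_skeleton M) \<phi>"
  shows "ideal_congruence M (boolean_kernel M \<phi>) \<inter> B \<times> B = \<phi>"
proof
  have "ideal_congruence M (boolean_kernel M \<phi>) \<inter> B \<times> B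
    = ideal_congruence (boolean_skeleton M) (boolean_kernel M \<phi>)"
    by (auto simp: ideal_congruence_def boolean_closed)
  also have "\<dots> \<subseteq> \<phi>"
    using \<phi> by (rule ideal_congruence_subset) (auto simp: boolean_kernel_def boolean_closed)
  finally show "ideal_congruence M (boolean_kernel M \<phi>) \<inter> B \<times> B \<subseteq> \<phi>" .
  show "\<phi> \<subseteq> ideal_congruence M (boolean_kernel M \<phi>) \<inter> B \<times> B"
    using boolean_pair_in_ideal_congruence[OF \<phi>] dm_congruence_subset[OF \<phi>] by auto
qed

lemma perfect_extension_iff_boolean_determined:
  "perfect_extension M (boolean_skeleton M) \<longleftrightarrow> boolean_determined M"
proof
  assume perfect: "perfect_extension M (boolean_skeleton M)"
  show "boolean_determined M"
    unfolding boolean_determined_def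
  proof (intro allI impI)
    fix \<theta> assume \<theta>: "dm_congruence M \<theta>"
    let ?\<phi> = "\<theta> \<inter> B \<times> B"
    have \<phi>: "dm_congruence (boolean_skeleton M) ?\<phi>"
      using \<theta> by (rule dm_congruence_restrict_boolean)
    have "dm_congruence M (ideal_congruence M (boolean_kernel M ?\<phi>))"
      using boolean_kernel_ideal[OF \<phi>] by (rule dm_congruence_ideal_congruence)
    then have "ideal_congruence M (boolean_kernel M ?\<phi>) = \<theta>"
      using perfect \<phi> \<theta> ideal_congruence_boolean_kernel_restrict[OF \<phi>]
      unfolding perfect_extension_def by blast
    then show "\<theta> \<subseteq> ideal_congruence M (boolean_kernel M \<theta>)"
      by (simp add: boolean_kernel_restrict)
  qed
next
  assume determined: "boolean_determined M"
  show "perfect_extension M (boolean_skeleton M)"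
    unfolding perfect_extension_def
  proof (intro allI impI)
    fix \<phi> assume \<phi>: "dm_congruence (boolean_skeleton M) \<phi>"
    let ?\<theta> = "ideal_congruence M (boolean_kernel M \<phi>)"
    show "\<exists>!\<theta>. dm_congruence M \<theta> \<and> \<theta> \<inter> B \<times> B = \<phi>"
    proof (rule ex1I)
      show "dm_congruence M ?\<theta> \<and> ?\<theta> \<inter> B \<times> B = \<phi>"
        using dm_congruence_ideal_congruence[OF boolean_kernel_ideal[OF \<phi>]]
          ideal_congruence_boolean_kernel_restrict[OF \<phi>] by simp
    next
      fix \<theta> assume \<theta>: "dm_congruence M \<theta> \<and> \<theta> \<inter> B \<times> B = \<phi>"
      then have kernel: "boolean_kernel M \<theta> = boolean_kernel M \<phi>"
        using boolean_kernel_restrict by metis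
      have "\<theta> \<subseteq> ?\<theta>"
        using determined \<theta> kernel unfolding boolean_determined_def by metis
      moreover have "?\<theta> \<subseteq> \<theta>"
        using \<theta> kernel by (intro ideal_congruence_subset) (auto simp: boolean_kernel_def)
      ultimately show "\<theta> = ?\<theta>" by blast
    qed
  qed
qed

lemma boolean_determined_iso:
  assumes iso: "dm_iso M P h" and determined: "boolean_determined P"
  shows "boolean_determined M"
  unfolding boolean_determined_def
proof (intro allI impI subsetI)
  fix \<theta> p assume \<theta>: "dm_congruence M \<theta>" and "p \<in> \<theta>"
  then obtain x y where p: "p = (x, y)" "(x, y) \<in> \<theta>" and xy: "x \<in> C" "y \<in> C"
    using dm_congruence_subset[OF \<theta>] by auto
  have bij: "bij_betw h C (carrier P)" and h0: "h \<zero> = zero P" and h1: "h \<one> = one P"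
    and hom: "\<And>x y. x \<in> C \<Longrightarrow> y \<in> C \<Longrightarrow> h (x \<squnion> y) = join P (h x) (h y)"
    and hom_neg: "\<And>x. x \<in> C \<Longrightarrow> h (x\<degree>) = neg P (h x)"
    using iso by (simp_all add: dm_iso_def)
  have h_eq: "a = b" if "h a = h b" "a \<in> C" "b \<in> C" for a b
    using that bij by (auto simp: bij_betw_def inj_on_def)
  let ?\<theta> = "map_prod h h ` \<theta>"
  have "(h x, h y) \<in> ideal_congruence P (boolean_kernel P ?\<theta>)"
    using determined dm_congruence_iso_image[OF iso \<theta>] p(2)
    unfolding boolean_determined_def by blast
  then obtain E where "E \<in> boolean_kernel P ?\<theta>" and join_E: "join P (h x) E = join P (h y) E"
    by (rule ideal_congruenceE)
  then have E: "E \<in> carrier P" "join P E (neg P E) = one P" "(E, zero P) \<in> ?\<theta>"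
    by (simp_all add: boolean_kernel_def carrier_boolean_skeleton)
  obtain e where e: "e \<in> C" "E = h e"
    using E(1) bij by (auto simp: bij_betw_def)
  have "e \<in> B"
    using e E(2) h_eq[of "e \<squnion> e\<degree>" \<one>] by (simp add: boolean_iff hom hom_neg h1)
  moreover have "(e, \<zero>) \<in> \<theta>"
  proof -
    obtain a b where "(a, b) \<in> \<theta>" "h e = h a" "zero P = h b"
      using E(3) e by auto
    moreover have "a \<in> C" "b \<in> C"
      using calculation(1) dm_congruence_subset[OF \<theta>] by auto
    ultimately show ?thesis
      using h_eq[of e a] h_eq[of \<zero> b] e h0 by simp
  qed
  moreover have "x \<squnion> e = y \<squnion> e"
    using join_E e xy h_eq[of "x \<squnion> e" "y \<squnion> e"] by (simp add: hom)
  ultimately show "p \<in> ideal_congruence M (boolean_kernel M \<theta>)"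
    using p xy by (auto simp: boolean_kernel_def intro: ideal_congruenceI)
qed

end

section \<open>Finite Boolean-determined algebras\<close>

primrec join_upto :: "'a dm \<Rightarrow> (nat \<Rightarrow> 'a) \<Rightarrow> nat \<Rightarrow> 'a" where
  "join_upto N f 0 = zero N"
| "join_upto N f (Suc n) = join N (join_upto N f n) (f n)"

lemma join_upto_cong: "(\<And>i. i < n \<Longrightarrow> f i = g i) \<Longrightarrow> join_upto N f n = join_upto N g n"
  by (induction n) auto

text \<open>For Boolean \<open>e\<close> this is a direct factor of \<open>N\<close>.\<close>
definition dm_interval :: "'a dm \<Rightarrow> 'a \<Rightarrow> 'a dm" where
  "dm_interval N e =
     \<lparr> carrier = {x \<in> carrier N. meet N x e = x}, join = join N, meet = meet N,
       neg = (\<lambda>x. meet N (neg N x) e), zero = zero N, one = e \<rparr>"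

text \<open>\<open>M1\<close> is the Boolean square with the twisted negation \<open>(a, b)\<degree> = (\<not> b, \<not> a)\<close>.\<close>
definition m1_pair :: "bool \<Rightarrow> bool \<Rightarrow> m1" where
  "m1_pair a b = (if a then (if b then E1 else Ea) else (if b then Eb else E0))"

lemma m1_pair_join: "m1_join (m1_pair a b) (m1_pair c d) = m1_pair (a \<or> c) (b \<or> d)"
  and m1_pair_meet: "m1_meet (m1_pair a b) (m1_pair c d) = m1_pair (a \<and> c) (b \<and> d)"
  and m1_pair_neg: "m1_neg (m1_pair a b) = m1_pair (\<not> b) (\<not> a)"
  and m1_pair_eq_iff: "m1_pair a b = m1_pair c d \<longleftrightarrow> a = c \<and> b = d"
  by (cases a; cases b; cases c; cases d; simp add: m1_pair_def)+

lemma m1_meet_E1 [simp]: "m1_meet x E1 = x"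
  by (cases x) simp_all

lemma M1_subalgebra_carrier_cases:
  assumes "E0 \<in> S" "E1 \<in> S" "Eb \<in> S \<Longrightarrow> Ea \<in> S"
  shows "S \<in> {{E0, E1}, {E0, Ea, E1}, {E0, Ea, Eb, E1}}"
proof -
  have "S \<subseteq> {E0, Ea, Eb, E1}"
    using m1.exhaust by blast
  then show ?thesis
    using assms by (cases "Ea \<in> S"; cases "Eb \<in> S") blast+
qed

lemma restrict_dm_M1_cases:
  assumes "S \<in> {{E0, E1}, {E0, Ea, E1}, {E0, Ea, Eb, E1}}"
  shows "restrict_dm M1 S \<in> {M1_two, M1_three, M1}"
proof -
  have "restrict_dm M1 {E0, Ea, Eb, E1} = M1"
    by (simp add: restrict_dm_def M1_def)
  then show ?thesis
    using assms unfolding M1_two_def M1_three_def by auto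
qed

context de_morgan
begin

definition atom :: "'a \<Rightarrow> bool" where
  "atom p \<longleftrightarrow> p \<in> C \<and> p \<noteq> \<zero> \<and> (\<forall>z\<in>C. z \<sqsubseteq> p \<longrightarrow> z = \<zero> \<or> z = p)"

definition boolean_atom :: "'a \<Rightarrow> bool" where
  "boolean_atom e \<longleftrightarrow> e \<in> B \<and> e \<noteq> \<zero> \<and> (\<forall>f\<in>B. f \<sqsubseteq> e \<longrightarrow> f = \<zero> \<or> f = e)"

lemma atom_closed: "atom p \<Longrightarrow> p \<in> C"
  and atom_nonzero: "atom p \<Longrightarrow> p \<noteq> \<zero>"
  by (simp_all add: atom_def)

lemma boolean_atom_boolean: "boolean_atom e \<Longrightarrow> e \<in> B"
  and boolean_atom_closed: "boolean_atom e \<Longrightarrow> e \<in> C"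
  and boolean_atom_nonzero: "boolean_atom e \<Longrightarrow> e \<noteq> \<zero>"
  by (simp_all add: boolean_atom_def boolean_closed)

lemma ex_minimal_nonzero:
  assumes fin: "finite C" and S: "S \<subseteq> C" and b: "b \<in> S" "b \<noteq> \<zero>"
  shows "\<exists>m\<in>S. m \<noteq> \<zero> \<and> m \<sqsubseteq> b \<and> (\<forall>z\<in>S. z \<sqsubseteq> m \<longrightarrow> z = \<zero> \<or> z = m)"
  using b
proof (induction "card {z \<in> C. z \<sqsubseteq> b}" arbitrary: b rule: less_induct)
  case less
  then have bC: "b \<in> C"
    using S by blast
  show ?case
  proof (cases "\<forall>z\<in>S. z \<sqsubseteq> b \<longrightarrow> z = \<zero> \<or> z = b")
    case True
    then show ?thesis
      using less.prems bC by auto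
  next
    case False
    then obtain z where z: "z \<in> S" "z \<sqsubseteq> b" "z \<noteq> \<zero>" "z \<noteq> b"
      by blast
    then have zC: "z \<in> C"
      using S by blast
    have "{y \<in> C. y \<sqsubseteq> z} \<subseteq> {y \<in> C. y \<sqsubseteq> b}"
      using z zC bC le_trans[of _ z b] by auto
    moreover have "b \<notin> {y \<in> C. y \<sqsubseteq> z}" "b \<in> {y \<in> C. y \<sqsubseteq> b}"
      using z zC bC le_antisym[of z b] by auto
    ultimately have "{y \<in> C. y \<sqsubseteq> z} \<subset> {y \<in> C. y \<sqsubseteq> b}"
      by blast
    then have "card {y \<in> C. y \<sqsubseteq> z} < card {y \<in> C. y \<sqsubseteq> b}"
      using fin by (intro psubset_card_mono) auto
    then obtain m where "m \<in> S" "m \<noteq> \<zero>" "m \<sqsubseteq> z" "\<forall>y\<in>S. y \<sqsubseteq> m \<longrightarrow> y = \<zero> \<or> y = m"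
      using less.hyps z by blast
    then show ?thesis
      using le_trans[of m z b] S z zC bC by blast
  qed
qed

lemma ex_atom_le:
  assumes "finite C" "b \<in> C" "b \<noteq> \<zero>"
  obtains p where "atom p" "p \<sqsubseteq> b"
  using ex_minimal_nonzero[of C b] assms unfolding atom_def by blast

lemma ex_boolean_atom_le:
  assumes "finite C" "b \<in> B" "b \<noteq> \<zero>"
  obtains e where "boolean_atom e" "e \<sqsubseteq> b"
  using ex_minimal_nonzero[of B b] assms boolean_closed unfolding boolean_atom_def by blast

lemma atom_meet_eq: "atom p \<Longrightarrow> x \<in> C \<Longrightarrow> x \<sqinter> p = (if p \<sqsubseteq> x then p else \<zero>)"
  unfolding atom_def using meet_le_right[of x p] meet_comm[of x p] by (auto simp: le_def)

lemma atom_le_join_iff: "atom p \<Longrightarrow> x \<in> C \<Longrightarrow> y \<in> C \<Longrightarrow> p \<sqsubseteq> x \<squnion> y \<longleftrightarrow> p \<sqsubseteq> x \<or> p \<sqsubseteq> y"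
proof
  assume p: "atom p" and xy: "x \<in> C" "y \<in> C" and le: "p \<sqsubseteq> x \<squnion> y"
  then have pC: "p \<in> C" and p0: "p \<noteq> \<zero>"
    by (simp_all add: atom_closed atom_nonzero)
  have "(x \<squnion> y) \<sqinter> p = x \<sqinter> p \<squnion> y \<sqinter> p"
    using pC xy by (rule meet_join_distrib_right)
  then show "p \<sqsubseteq> x \<or> p \<sqsubseteq> y"
    using atom_meet_eq[OF p, of x] atom_meet_eq[OF p, of y] atom_meet_eq[OF p, of "x \<squnion> y"]
      xy le p0 by (auto split: if_splits)
next
  assume "atom p" "x \<in> C" "y \<in> C" "p \<sqsubseteq> x \<or> p \<sqsubseteq> y"
  then show "p \<sqsubseteq> x \<squnion> y"
    using le_trans[OF _ _ _ _ join_upper_left, of p x y] le_trans[OF _ _ _ _ join_upper_right, of p y x]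
      atom_closed[of p] by auto
qed

lemma boolean_atom_meet_eq:
  assumes "boolean_atom e" "f \<in> B"
  shows "f \<sqinter> e = \<zero> \<or> f \<sqinter> e = e"
  using assms meet_boolean[of f e] meet_le_right[of f e] boolean_closed
  unfolding boolean_atom_def by blast

lemma boolean_atoms_disjoint:
  assumes "boolean_atom e" "boolean_atom e'" "e \<noteq> e'"
  shows "e \<sqinter> e' = \<zero>"
  using boolean_atom_meet_eq[OF assms(1), of e'] boolean_atom_meet_eq[OF assms(2), of e] assms
    meet_comm[of e e'] boolean_closed unfolding boolean_atom_def by metis

lemma join_upto_closed: "(\<And>i. i < n \<Longrightarrow> f i \<in> C) \<Longrightarrow> join_upto M f n \<in> C"
  by (induction n) auto

lemma meet_join_upto:
  "x \<in> C \<Longrightarrow> (\<And>i. i < n \<Longrightarrow> f i \<in> C) \<Longrightarrow> x \<sqinter> join_upto M f n = join_upto M (\<lambda>i. x \<sqinter> f i) n"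
  by (induction n) (simp_all add: meet_join_distrib join_upto_closed)

lemma le_join_upto: "(\<And>i. i < n \<Longrightarrow> f i \<in> C) \<Longrightarrow> i < n \<Longrightarrow> f i \<sqsubseteq> join_upto M f n"
proof (induction n)
  case (Suc n)
  have C: "join_upto M f n \<in> C" "f n \<in> C" "f i \<in> C"
    using Suc.prems join_upto_closed[of n f] by auto
  show ?case
  proof (cases "i = n")
    case True
    then show ?thesis
      using C join_upper_right by simp
  next
    case False
    then have "f i \<sqsubseteq> join_upto M f n"
      using Suc by simp
    then show ?thesis
      using C le_trans[OF _ _ _ _ join_upper_left[of "join_upto M f n" "f n"]] by simp
  qed
qed simp

lemma join_upto_boolean: "(\<And>i. i < n \<Longrightarrow> f i \<in> B) \<Longrightarrow> join_upto M f n \<in> B"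
  by (induction n) (simp_all add: join_boolean)

lemma join_upto_single:
  assumes "j < n" "f j \<in> C" "\<And>i. i < n \<Longrightarrow> i \<noteq> j \<Longrightarrow> f i = \<zero>"
  shows "join_upto M f n = f j"
proof -
  have "join_upto M f m = (if j < m then f j else \<zero>)" if "m \<le> n" for m
    using that
  proof (induction m)
    case (Suc m)
    then have IH: "join_upto M f m = (if j < m then f j else \<zero>)"
      by simp
    show ?case
    proof (cases "m = j")
      case False
      then have "f m = \<zero>"
        using assms(3) Suc.prems by simp
      then show ?thesis
        using IH assms(2) False by (simp add: less_Suc_eq)
    qed (use IH assms(2) in simp)
  qed simp
  then show ?thesis
    using assms(1) by simp
qed

lemma meet_meet_distrib: "x \<in> C \<Longrightarrow> y \<in> C \<Longrightarrow> z \<in> C \<Longrightarrow> x \<sqinter> y \<sqinter> z = (x \<sqinter> z) \<sqinter> (y \<sqinter> z)"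
  using meet_assoc[of x z "y \<sqinter> z"] meet_left_comm[of z y z] meet_assoc[of y z z] meet_assoc[of x y z]
  by simp

lemma carrier_dm_interval: "carrier (dm_interval M e) = {x \<in> C. x \<sqsubseteq> e}"
  by (simp add: dm_interval_def le_def)

lemma neg_meet_boolean: "e \<in> B \<Longrightarrow> x \<in> C \<Longrightarrow> (x \<sqinter> e)\<degree> \<sqinter> e = x\<degree> \<sqinter> e"
proof -
  assume e: "e \<in> B" and x: "x \<in> C"
  have eC: "e \<in> C" using e by (rule boolean_closed)
  have "(x \<sqinter> e)\<degree> \<sqinter> e = x\<degree> \<sqinter> e \<squnion> e\<degree> \<sqinter> e"
    using x eC by (simp add: neg_meet meet_join_distrib_right)
  also have "e\<degree> \<sqinter> e = \<zero>"
    using boolean_meet_neg[OF e] meet_comm[of e "e\<degree>"] eC by simp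
  finally show ?thesis using x eC by simp
qed

lemma join_upto_meet_cover:
  assumes "\<And>i. i < n \<Longrightarrow> e i \<in> C" and "join_upto M e n = \<one>" and "x \<in> C"
  shows "join_upto M (\<lambda>i. x \<sqinter> e i) n = x"
  using assms by (simp add: meet_join_upto[symmetric])

lemma join_upto_meet_disjoint:
  assumes eC: "\<And>i. i < n \<Longrightarrow> e i \<in> C"
    and disjoint: "\<And>i j. i < n \<Longrightarrow> j < n \<Longrightarrow> i \<noteq> j \<Longrightarrow> e i \<sqinter> e j = \<zero>"
    and FC: "\<And>i. i < n \<Longrightarrow> F i \<in> C" and Fe: "\<And>i. i < n \<Longrightarrow> F i \<sqinter> e i = F i"
    and j: "j < n"
  shows "join_upto M F n \<sqinter> e j = F j"
proof -
  have "join_upto M F n \<sqinter> e j = e j \<sqinter> join_upto M F n"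
    using FC eC j join_upto_closed[of n F] meet_comm[of "join_upto M F n" "e j"] by simp
  also have "\<dots> = join_upto M (\<lambda>i. e j \<sqinter> F i) n"
    using FC eC j by (simp add: meet_join_upto)
  also have "\<dots> = e j \<sqinter> F j"
  proof (rule join_upto_single)
    fix i assume i: "i < n" "i \<noteq> j"
    have "e j \<sqinter> F i = e j \<sqinter> (F i \<sqinter> e i)"
      using Fe[OF i(1)] by simp
    also have "\<dots> = F i \<sqinter> (e j \<sqinter> e i)"
      using meet_left_comm[of "e j" "F i" "e i"] FC[OF i(1)] eC[OF i(1)] eC[OF j] by simp
    also have "\<dots> = \<zero>"
      using disjoint[OF j i(1)] i FC by simp
    finally show "e j \<sqinter> F i = \<zero>" .
  qed (use j FC eC in auto)
  also have "\<dots> = F j"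
    using Fe[OF j] FC[OF j] eC[OF j] meet_comm[of "e j" "F j"] by simp
  finally show ?thesis .
qed

lemma dm_iso_product_intervals:
  assumes boolean: "\<And>i. i < n \<Longrightarrow> e i \<in> B"
    and disjoint: "\<And>i j. i < n \<Longrightarrow> j < n \<Longrightarrow> i \<noteq> j \<Longrightarrow> e i \<sqinter> e j = \<zero>"
    and cover: "join_upto M e n = \<one>"
  shows "dm_iso M (dm_product n (\<lambda>i. dm_interval M (e i))) (\<lambda>x. \<lambda>i\<in>{..<n}. x \<sqinter> e i)"
proof -
  let ?P = "dm_product n (\<lambda>i. dm_interval M (e i))"
  let ?h = "\<lambda>x. \<lambda>i\<in>{..<n}. x \<sqinter> e i"
  have eC: "e i \<in> C" if "i < n" for i
    using boolean[OF that] by (rule boolean_closed)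
  have carrier_P: "carrier ?P = (\<Pi>\<^sub>E i\<in>{..<n}. {x \<in> C. x \<sqinter> e i = x})"
    by (simp add: dm_product_def dm_interval_def)
  have bij: "bij_betw ?h C (carrier ?P)"
  proof (rule bij_betw_byWitness[where f' = "\<lambda>F. join_upto M F n"])
    show "\<forall>x\<in>C. join_upto M (?h x) n = x"
      using join_upto_meet_cover[OF eC cover] join_upto_cong[of n "?h _" "\<lambda>i. _ \<sqinter> e i"] by simp
    show "\<forall>F\<in>carrier ?P. ?h (join_upto M F n) = F"
    proof
      fix F assume F: "F \<in> carrier ?P"
      then have "F i \<in> C" "F i \<sqinter> e i = F i" if "i < n" for i
        using that by (auto simp: carrier_P)
      then show "?h (join_upto M F n) = F"
        using F join_upto_meet_disjoint[where e = e and F = F, OF eC disjoint]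
        by (auto simp: carrier_P PiE_iff intro!: extensionalityI[of _ "{..<n}"])
    qed
    have "x \<sqinter> e i \<sqinter> e i = x \<sqinter> e i" if "x \<in> C" "i < n" for x i
      using that eC meet_assoc[of x "e i" "e i"] by simp
    then show "?h ` C \<subseteq> carrier ?P"
      using eC by (simp add: carrier_P PiE_iff image_subset_iff)
    show "(\<lambda>F. join_upto M F n) ` carrier ?P \<subseteq> C"
      by (auto simp: carrier_P intro: join_upto_closed)
  qed
  show ?thesis
    unfolding dm_iso_def
  proof (intro conjI ballI)
    show "bij_betw ?h C (carrier ?P)" by (fact bij)
    fix x y assume xy: "x \<in> C" "y \<in> C"
    show "?h (x \<squnion> y) = join ?P (?h x) (?h y)"
      using xy eC by (auto simp: dm_product_def dm_interval_def meet_join_distrib_right intro!: restrict_ext)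
    have "x \<sqinter> y \<sqinter> e i = x \<sqinter> e i \<sqinter> (y \<sqinter> e i)" if "i < n" for i
      using xy eC[OF that] by (rule meet_meet_distrib)
    then show "?h (x \<sqinter> y) = meet ?P (?h x) (?h y)"
      by (auto simp: dm_product_def dm_interval_def intro!: restrict_ext)
  next
    fix x assume x: "x \<in> C"
    show "?h (x\<degree>) = neg ?P (?h x)"
      using x boolean by (auto simp: dm_product_def dm_interval_def neg_meet_boolean intro!: restrict_ext)
  next
    show "?h \<zero> = zero ?P" "?h \<one> = one ?P"
      using eC by (auto simp: dm_product_def dm_interval_def intro!: restrict_ext)
  qed
qed

lemma dm_congruence_kernel_meet_join:
  assumes c: "c \<in> C"
  shows "dm_congruence M {(x, y). x \<in> C \<and> y \<in> C \<and> x \<sqinter> c = y \<sqinter> c \<and> x \<squnion> c\<degree> = y \<squnion> c\<degree>}"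
    (is "dm_congruence M ?\<theta>")
proof (rule dm_congruenceI)
  show "(x \<squnion> u, y \<squnion> v) \<in> ?\<theta>" if "(x, y) \<in> ?\<theta>" "(u, v) \<in> ?\<theta>" for x y u v
    using that c meet_join_distrib_right[of c x u] meet_join_distrib_right[of c y v]
      join_join_distrib[of x u "c\<degree>"] join_join_distrib[of y v "c\<degree>"] by auto
  show "(x \<sqinter> u, y \<sqinter> v) \<in> ?\<theta>" if "(x, y) \<in> ?\<theta>" "(u, v) \<in> ?\<theta>" for x y u v
    using that c meet_meet_distrib[of x u c] meet_meet_distrib[of y v c]
      join_meet_distrib_right[of "c\<degree>" x u] join_meet_distrib_right[of "c\<degree>" y v] by auto
  \<comment> \<open>negation swaps the two components: \<open>(x \<squnion> c\<degree>)\<degree> = x\<degree> \<sqinter> c\<close>, \<open>(x \<sqinter> c)\<degree> = x\<degree> \<squnion> c\<degree>\<close>\<close>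
  show "(x\<degree>, y\<degree>) \<in> ?\<theta>" if "(x, y) \<in> ?\<theta>" for x y
    using that c neg_join[of x "c\<degree>"] neg_join[of y "c\<degree>"] neg_meet[of x c] neg_meet[of y c]
    by auto
qed auto

text \<open>A Boolean witness \<open>f\<close> for the congruence of \<open>dm_congruence_kernel_meet_join\<close> satisfies
  \<open>f \<sqinter> c = \<zero>\<close>, hence \<open>f \<sqinter> e = \<zero>\<close> because \<open>e\<close> is a Boolean atom, and joining with \<open>f\<close> does not
  change the part below \<open>e\<close>.\<close>
lemma meet_boolean_atom_eq:
  assumes determined: "boolean_determined M" and e: "boolean_atom e"
    and c: "c \<in> C" "c \<noteq> \<zero>" "c \<sqsubseteq> e"
    and uv: "u \<in> C" "v \<in> C" "u \<sqinter> c = v \<sqinter> c" "u \<squnion> c\<degree> = v \<squnion> c\<degree>"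
  shows "u \<sqinter> e = v \<sqinter> e"
proof -
  let ?\<theta> = "{(x, y). x \<in> C \<and> y \<in> C \<and> x \<sqinter> c = y \<sqinter> c \<and> x \<squnion> c\<degree> = y \<squnion> c\<degree>}"
  have eC: "e \<in> C"
    using e by (rule boolean_atom_closed)
  have "(u, v) \<in> ideal_congruence M (boolean_kernel M ?\<theta>)"
    using determined dm_congruence_kernel_meet_join[OF c(1)] uv
    unfolding boolean_determined_def by blast
  then obtain f where f: "f \<in> B" "(f, \<zero>) \<in> ?\<theta>" and join_f: "u \<squnion> f = v \<squnion> f"
    by (auto elim: ideal_congruenceE simp: boolean_kernel_def)
  have fC: "f \<in> C"
    using f(1) by (rule boolean_closed)
  have "f \<sqinter> e \<noteq> e"
  proof
    assume fe: "f \<sqinter> e = e"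
    have "c = c \<sqinter> (f \<sqinter> e)"
      using c(3) fe by (simp add: le_def)
    also have "\<dots> = (f \<sqinter> c) \<sqinter> e"
      using c(1) fC eC meet_assoc[of c f e] meet_comm[of c f] by simp
    also have "f \<sqinter> c = \<zero>"
      using f(2) c(1) by simp
    finally show False
      using c eC by simp
  qed
  then have fe: "f \<sqinter> e = \<zero>"
    using boolean_atom_meet_eq[OF e f(1)] by simp
  have "u \<sqinter> e = (u \<squnion> f) \<sqinter> e"
    using uv fC eC fe by (simp add: meet_join_distrib_right)
  also have "\<dots> = v \<sqinter> e"
    using uv fC eC fe join_f by (simp add: meet_join_distrib_right)
  finally show ?thesis .
qed

text \<open>The homomorphism into \<open>M1\<close> induced by the prime filter generated by an atom \<open>p\<close>.\<close>
definition m1_point :: "'a \<Rightarrow> 'a \<Rightarrow> m1" where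
  "m1_point p x = m1_pair (p \<sqsubseteq> x) (\<not> p \<sqsubseteq> x\<degree>)"

context
  fixes p
  assumes p: "atom p"
begin

lemma m1_point_join: "x \<in> C \<Longrightarrow> y \<in> C \<Longrightarrow> m1_point p (x \<squnion> y) = m1_join (m1_point p x) (m1_point p y)"
  by (simp add: m1_point_def m1_pair_join atom_le_join_iff[OF p] neg_join le_meet_iff atom_closed[OF p])

lemma m1_point_meet: "x \<in> C \<Longrightarrow> y \<in> C \<Longrightarrow> m1_point p (x \<sqinter> y) = m1_meet (m1_point p x) (m1_point p y)"
  by (simp add: m1_point_def m1_pair_meet atom_le_join_iff[OF p] neg_meet le_meet_iff atom_closed[OF p])

lemma m1_point_neg: "x \<in> C \<Longrightarrow> m1_point p (x\<degree>) = m1_neg (m1_point p x)"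
  by (simp add: m1_point_def m1_pair_neg)

lemma m1_point_zero: "m1_point p \<zero> = E0"
  using p by (simp add: m1_point_def m1_pair_def atom_def le_zero_iff)

lemma m1_point_boolean:
  assumes "e \<in> B" "p \<sqsubseteq> e"
  shows "m1_point p e = E1"
proof -
  have "\<not> p \<sqsubseteq> e\<degree>"
    using assms p boolean_meet_neg[of e] le_meet_iff[of e "e\<degree>" p] le_zero_iff[of p] boolean_closed
      atom_closed atom_nonzero by auto
  then show ?thesis
    using assms by (simp add: m1_point_def m1_pair_def)
qed

end

context
  fixes e p
  assumes e: "boolean_atom e" and p: "atom p" and p_le_e: "p \<sqsubseteq> e"
begin

lemma inj_on_m1_point_interval:
  assumes determined: "boolean_determined M"
  shows "inj_on (m1_point p) (carrier (dm_interval M e))"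
proof (rule inj_onI)
  fix x y
  assume "x \<in> carrier (dm_interval M e)" "y \<in> carrier (dm_interval M e)"
    and eq: "m1_point p x = m1_point p y"
  then have C: "x \<in> C" "y \<in> C" and le: "x \<sqsubseteq> e" "y \<sqsubseteq> e"
    by (auto simp: carrier_dm_interval)
  have pC: "p \<in> C" and p0: "p \<noteq> \<zero>"
    using p by (simp_all add: atom_closed atom_nonzero)
  have same: "p \<sqsubseteq> x \<longleftrightarrow> p \<sqsubseteq> y" "p \<sqsubseteq> x\<degree> \<longleftrightarrow> p \<sqsubseteq> y\<degree>"
    using eq by (auto simp: m1_point_def m1_pair_eq_iff)
  have "x \<sqinter> p = y \<sqinter> p"
    using same(1) atom_meet_eq[OF p] C by simp
  moreover have "z \<squnion> p\<degree> = (if p \<sqsubseteq> z\<degree> then p\<degree> else \<one>)" if "z \<in> C" for z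
    using that atom_meet_eq[OF p, of "z\<degree>"] neg_meet[of "z\<degree>" p] pC by auto
  then have "x \<squnion> p\<degree> = y \<squnion> p\<degree>"
    using same(2) C by simp
  ultimately have "x \<sqinter> e = y \<sqinter> e"
    using meet_boolean_atom_eq[OF determined e pC p0 p_le_e C] by blast
  then show "x = y"
    using le by (simp add: le_def)
qed

lemma m1_point_interval_image:
  assumes determined: "boolean_determined M"
  shows "m1_point p ` carrier (dm_interval M e) \<in> {{E0, E1}, {E0, Ea, E1}, {E0, Ea, Eb, E1}}"
proof -
  let ?D = "carrier (dm_interval M e)"
  let ?S = "m1_point p ` ?D"
  have pC: "p \<in> C"
    using p by (rule atom_closed)
  have D: "\<zero> \<in> ?D" "e \<in> ?D" "p \<in> ?D"
    using boolean_atom_closed[OF e] p_le_e pC by (auto simp: carrier_dm_interval)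
  then have "E0 \<in> ?S" "E1 \<in> ?S"
    using m1_point_zero[OF p] m1_point_boolean[OF p boolean_atom_boolean[OF e] p_le_e] by force+
  moreover have "Ea \<in> ?S" if "Eb \<in> ?S"
  proof (cases "p \<sqsubseteq> p\<degree>")
    case True
    then show "Ea \<in> ?S"
      using D(3) pC image_eqI[of Ea "m1_point p" p ?D] by (simp add: m1_point_def m1_pair_def)
  next
    case False
    then have "m1_point p p = m1_point p e"
      using pC m1_point_boolean[OF p boolean_atom_boolean[OF e] p_le_e]
      by (simp add: m1_point_def m1_pair_def)
    then have "p = e"
      using inj_on_m1_point_interval[OF determined] D by (auto dest: inj_onD)
    then have "?D \<subseteq> {\<zero>, e}"
      using p by (auto simp: carrier_dm_interval atom_def)
    then have "?S \<subseteq> {E0, E1}"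
      using m1_point_zero[OF p] m1_point_boolean[OF p boolean_atom_boolean[OF e] p_le_e] by auto
    then show "Ea \<in> ?S"
      using that by auto
  qed
  ultimately show ?thesis
    by (rule M1_subalgebra_carrier_cases)
qed

lemma dm_iso_interval_M1:
  assumes determined: "boolean_determined M"
  shows "dm_iso (dm_interval M e) (restrict_dm M1 (m1_point p ` carrier (dm_interval M e))) (m1_point p)"
  unfolding dm_iso_def
proof (intro conjI ballI)
  show "bij_betw (m1_point p) (carrier (dm_interval M e))
      (carrier (restrict_dm M1 (m1_point p ` carrier (dm_interval M e))))"
    using inj_on_m1_point_interval[OF determined] by (simp add: bij_betw_def restrict_dm_def)
next
  fix x y assume "x \<in> carrier (dm_interval M e)" "y \<in> carrier (dm_interval M e)"
  then have "x \<in> C" "y \<in> C"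
    by (simp_all add: carrier_dm_interval)
  then show "m1_point p (join (dm_interval M e) x y) =
      join (restrict_dm M1 (m1_point p ` carrier (dm_interval M e))) (m1_point p x) (m1_point p y)"
    and "m1_point p (meet (dm_interval M e) x y) =
      meet (restrict_dm M1 (m1_point p ` carrier (dm_interval M e))) (m1_point p x) (m1_point p y)"
    by (simp_all add: dm_interval_def restrict_dm_def M1_def m1_point_join[OF p] m1_point_meet[OF p])
next
  fix x assume "x \<in> carrier (dm_interval M e)"
  then have "x \<in> C"
    by (simp add: carrier_dm_interval)
  then show "m1_point p (neg (dm_interval M e) x) =
      neg (restrict_dm M1 (m1_point p ` carrier (dm_interval M e))) (m1_point p x)"
    using boolean_atom_closed[OF e] m1_point_boolean[OF p boolean_atom_boolean[OF e] p_le_e]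
    by (simp add: dm_interval_def restrict_dm_def M1_def m1_point_meet[OF p] m1_point_neg[OF p])
next
  show "m1_point p (zero (dm_interval M e)) = zero (restrict_dm M1 (m1_point p ` carrier (dm_interval M e)))"
    "m1_point p (one (dm_interval M e)) = one (restrict_dm M1 (m1_point p ` carrier (dm_interval M e)))"
    using m1_point_zero[OF p] m1_point_boolean[OF p boolean_atom_boolean[OF e] p_le_e]
    by (simp_all add: dm_interval_def restrict_dm_def M1_def)
qed

end

lemma interval_isomorphic_M1_subalgebra:
  assumes fin: "finite C" and determined: "boolean_determined M" and e: "boolean_atom e"
  shows "\<exists>A\<in>{M1_two, M1_three, M1}. dm_isomorphic (dm_interval M e) A"
proof -
  obtain p where p: "atom p" "p \<sqsubseteq> e"
    using ex_atom_le[OF fin] e boolean_atom_closed boolean_atom_nonzero by metis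
  let ?S = "m1_point p ` carrier (dm_interval M e)"
  have "restrict_dm M1 ?S \<in> {M1_two, M1_three, M1}"
    using m1_point_interval_image[OF e p determined] by (rule restrict_dm_M1_cases)
  then show ?thesis
    using dm_iso_interval_M1[OF e p determined] unfolding dm_isomorphic_def by blast
qed

lemma join_boolean_atoms_eq_one:
  assumes fin: "finite C" and atoms: "\<And>i. i < n \<Longrightarrow> boolean_atom (e i)"
    and all_atoms: "\<And>a. boolean_atom a \<Longrightarrow> \<exists>i<n. a = e i"
  shows "join_upto M e n = \<one>"
proof (rule ccontr)
  let ?s = "join_upto M e n"
  assume "?s \<noteq> \<one>"
  have eB: "e i \<in> B" if "i < n" for i
    using atoms[OF that] by (rule boolean_atom_boolean)
  then have sB: "?s \<in> B"
    by (rule join_upto_boolean)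
  then have sC: "?s \<in> C"
    by (rule boolean_closed)
  have "?s\<degree> \<noteq> \<zero>"
    using \<open>?s \<noteq> \<one>\<close> neg_neg[OF sC] by auto
  then obtain a where a: "boolean_atom a" "a \<sqsubseteq> ?s\<degree>"
    using ex_boolean_atom_le[OF fin neg_boolean[OF sB]] by blast
  then obtain i where "i < n" "a = e i"
    using all_atoms by blast
  then have "a \<sqsubseteq> ?s"
    using le_join_upto[of n e i] eB boolean_closed by blast
  then have "a \<sqsubseteq> ?s \<sqinter> ?s\<degree>"
    using a sC boolean_closed le_meet_iff[of ?s "?s\<degree>" a] by (simp add: boolean_atom_def)
  then show False
    using a boolean_meet_neg[OF sB] le_zero_iff boolean_closed by (simp add: boolean_atom_def)
qed

theorem boolean_determined_product_decomposition:
  assumes fin: "finite C" and determined: "boolean_determined M"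
  shows "\<exists>n A. (\<forall>i<n. A i \<in> {M1_two, M1_three, M1}) \<and> dm_isomorphic M (dm_product n A)"
proof -
  have "finite {e. boolean_atom e}"
    using fin by (rule finite_subset[rotated]) (auto simp: boolean_atom_closed)
  then obtain es where es: "set es = {e. boolean_atom e}" "distinct es"
    using finite_distinct_list by blast
  define n where "n = length es"
  define e where "e i = es ! i" for i
  have atoms: "boolean_atom (e i)" if "i < n" for i
    using that es(1) nth_mem unfolding e_def n_def by blast
  have disjoint: "e i \<sqinter> e j = \<zero>" if "i < n" "j < n" "i \<noteq> j" for i j
    using that es(2) atoms boolean_atoms_disjoint nth_eq_iff_index_eq unfolding e_def n_def by metis
  have "\<exists>i<n. a = e i" if "boolean_atom a" for a
    using that es(1) in_set_conv_nth[of a es] unfolding e_def n_def by auto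
  then have cover: "join_upto M e n = \<one>"
    using fin atoms by (intro join_boolean_atoms_eq_one)
  have "\<forall>i<n. \<exists>A g. A \<in> {M1_two, M1_three, M1} \<and> dm_iso (dm_interval M (e i)) A g"
    using interval_isomorphic_M1_subalgebra[OF fin determined atoms] unfolding dm_isomorphic_def by blast
  then obtain A g where A: "\<And>i. i < n \<Longrightarrow> A i \<in> {M1_two, M1_three, M1}"
    and g: "\<And>i. i < n \<Longrightarrow> dm_iso (dm_interval M (e i)) (A i) (g i)"
    by metis
  have "dm_iso M (dm_product n (\<lambda>i. dm_interval M (e i))) (\<lambda>x. \<lambda>i\<in>{..<n}. x \<sqinter> e i)"
    using atoms disjoint cover by (intro dm_iso_product_intervals) (simp_all add: boolean_atom_boolean)
  moreover have "dm_iso (dm_product n (\<lambda>i. dm_interval M (e i))) (dm_product n A)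
      (\<lambda>F. \<lambda>i\<in>{..<n}. g i (F i))"
    using g by (rule dm_iso_product)
  ultimately show ?thesis
    using A dm_iso_comp unfolding dm_isomorphic_def by blast
qed

end

section \<open>Products of simple algebras\<close>

definition dm_simple :: "'a dm \<Rightarrow> bool" where
  "dm_simple A \<longleftrightarrow> (\<forall>\<rho>. dm_congruence A \<rho> \<longrightarrow> \<rho> \<subseteq> Id \<or> (zero A, one A) \<in> \<rho>)"

definition dm_unit :: "nat \<Rightarrow> (nat \<Rightarrow> 'a dm) \<Rightarrow> nat \<Rightarrow> 'a \<Rightarrow> nat \<Rightarrow> 'a" where
  "dm_unit n A i s = (\<lambda>j\<in>{..<n}. if j = i then s else zero (A j))"

definition dm_indicator :: "nat \<Rightarrow> (nat \<Rightarrow> 'a dm) \<Rightarrow> nat set \<Rightarrow> nat \<Rightarrow> 'a" where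
  "dm_indicator n A T = (\<lambda>j\<in>{..<n}. if j \<in> T then one (A j) else zero (A j))"

context
  fixes n :: nat and A :: "nat \<Rightarrow> 'a dm"
  assumes factors: "\<And>i. i < n \<Longrightarrow> de_morgan_algebra (A i)"
begin

lemma de_morgan_factor: "i < n \<Longrightarrow> de_morgan (A i)"
  using factors by (rule de_morgan.intro)

lemma factor_zero_one:
  assumes "j < n"
  shows "zero (A j) \<in> carrier (A j)" "one (A j) \<in> carrier (A j)"
    "neg (A j) (zero (A j)) = one (A j)" "neg (A j) (one (A j)) = zero (A j)"
    "join (A j) (zero (A j)) (zero (A j)) = zero (A j)" "join (A j) (zero (A j)) (one (A j)) = one (A j)"
    "join (A j) (one (A j)) (zero (A j)) = one (A j)" "join (A j) (one (A j)) (one (A j)) = one (A j)"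
  using de_morgan_factor[OF assms] by (simp_all add: de_morgan.zero_closed de_morgan.one_closed
      de_morgan.neg_zero de_morgan.neg_one de_morgan.join_zero de_morgan.join_one)

lemma dm_unit_closed: "i < n \<Longrightarrow> s \<in> carrier (A i) \<Longrightarrow> dm_unit n A i s \<in> carrier (dm_product n A)"
  by (auto simp: dm_unit_def dm_product_def factor_zero_one)

lemma dm_unit_zero: "dm_unit n A i (zero (A i)) = zero (dm_product n A)"
  by (auto simp: dm_unit_def dm_product_def intro!: restrict_ext)

lemma dm_unit_join:
  assumes "i < n" "s \<in> carrier (A i)" "t \<in> carrier (A i)"
  shows "join (dm_product n A) (dm_unit n A i s) (dm_unit n A i t) = dm_unit n A i (join (A i) s t)"
  using factor_zero_one(5) by (auto simp: dm_unit_def dm_product_def intro!: restrict_ext)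

lemma dm_unit_meet:
  assumes "i < n" "s \<in> carrier (A i)" "t \<in> carrier (A i)"
  shows "meet (dm_product n A) (dm_unit n A i s) (dm_unit n A i t) = dm_unit n A i (meet (A i) s t)"
proof -
  have "meet (A j) (zero (A j)) (zero (A j)) = zero (A j)" if "j < n" for j
    using de_morgan_factor[OF that] by (simp add: de_morgan.meet_zero de_morgan.zero_closed)
  then show ?thesis
    by (auto simp: dm_unit_def dm_product_def intro!: restrict_ext)
qed

lemma dm_unit_neg:
  assumes "i < n" "s \<in> carrier (A i)"
  shows "meet (dm_product n A) (neg (dm_product n A) (dm_unit n A i s)) (dm_unit n A i (one (A i)))
    = dm_unit n A i (neg (A i) s)"
proof -
  have "meet (A j) (neg (A j) (zero (A j))) (zero (A j)) = zero (A j)" if "j < n" for j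
    using de_morgan_factor[OF that] by (simp add: de_morgan.meet_zero de_morgan.zero_closed de_morgan.neg_closed)
  moreover have "meet (A i) (neg (A i) s) (one (A i)) = neg (A i) s"
    using de_morgan_factor[OF assms(1)] assms(2) by (simp add: de_morgan.meet_one de_morgan.neg_closed)
  ultimately show ?thesis
    by (auto simp: dm_unit_def dm_product_def intro!: restrict_ext)
qed

lemma meet_dm_unit_one:
  assumes "i < n" "X \<in> carrier (dm_product n A)"
  shows "meet (dm_product n A) X (dm_unit n A i (one (A i))) = dm_unit n A i (X i)"
proof -
  have X: "X j \<in> carrier (A j)" if "j < n" for j
    using assms(2) that by (auto simp: dm_product_def)
  have "meet (A j) (X j) (zero (A j)) = zero (A j)" if "j < n" for j
    using de_morgan_factor[OF that] X[OF that] by (simp add: de_morgan.meet_zero)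
  moreover have "meet (A i) (X i) (one (A i)) = X i"
    using de_morgan_factor[OF assms(1)] X[OF assms(1)] by (simp add: de_morgan.meet_one)
  ultimately show ?thesis
    by (auto simp: dm_unit_def dm_product_def intro!: restrict_ext)
qed

lemma dm_congruence_coordinate:
  assumes \<theta>: "dm_congruence (dm_product n A) \<theta>" and i: "i < n"
  shows "dm_congruence (A i)
    {(s, t). s \<in> carrier (A i) \<and> t \<in> carrier (A i) \<and> (dm_unit n A i s, dm_unit n A i t) \<in> \<theta>}"
    (is "dm_congruence (A i) ?\<rho>")
proof (rule dm_congruenceI)
  note closed = de_morgan.join_closed[OF de_morgan_factor[OF i]] de_morgan.meet_closed[OF de_morgan_factor[OF i]]
    de_morgan.neg_closed[OF de_morgan_factor[OF i]] de_morgan.one_closed[OF de_morgan_factor[OF i]]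
  show "?\<rho> \<subseteq> carrier (A i) \<times> carrier (A i)"
    by blast
  show "(s, s) \<in> ?\<rho>" if "s \<in> carrier (A i)" for s
    using that i by (simp add: dm_congruence_refl[OF \<theta>] dm_unit_closed)
  show "(t, s) \<in> ?\<rho>" if "(s, t) \<in> ?\<rho>" for s t
    using that dm_congruence_sym[OF \<theta>] by blast
  show "(s, u) \<in> ?\<rho>" if "(s, t) \<in> ?\<rho>" "(t, u) \<in> ?\<rho>" for s t u
    using that dm_congruence_trans[OF \<theta>] by blast
  have binop: "(op s u, op t v) \<in> ?\<rho>"
    if "(s, t) \<in> ?\<rho>" "(u, v) \<in> ?\<rho>"
      and op_closed: "\<And>a b. a \<in> carrier (A i) \<Longrightarrow> b \<in> carrier (A i) \<Longrightarrow> op a b \<in> carrier (A i)"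
      and unit: "\<And>a b. a \<in> carrier (A i) \<Longrightarrow> b \<in> carrier (A i) \<Longrightarrow>
        Op (dm_unit n A i a) (dm_unit n A i b) = dm_unit n A i (op a b)"
      and compat: "\<And>x y x' y'. (x, y) \<in> \<theta> \<Longrightarrow> (x', y') \<in> \<theta> \<Longrightarrow> (Op x x', Op y y') \<in> \<theta>"
    for op Op s t u v
  proof -
    have C: "s \<in> carrier (A i)" "t \<in> carrier (A i)" "u \<in> carrier (A i)" "v \<in> carrier (A i)"
      and rel: "(dm_unit n A i s, dm_unit n A i t) \<in> \<theta>" "(dm_unit n A i u, dm_unit n A i v) \<in> \<theta>"
      using that(1,2) by auto
    show ?thesis
      using compat[OF rel] C by (simp add: unit op_closed)
  qed
  show "(join (A i) s u, join (A i) t v) \<in> ?\<rho>" if "(s, t) \<in> ?\<rho>" "(u, v) \<in> ?\<rho>" for s t u v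
    using that closed(1) dm_unit_join[OF i] dm_congruence_join[OF \<theta>] by (rule binop)
  show "(meet (A i) s u, meet (A i) t v) \<in> ?\<rho>" if "(s, t) \<in> ?\<rho>" "(u, v) \<in> ?\<rho>" for s t u v
    using that closed(2) dm_unit_meet[OF i] dm_congruence_meet[OF \<theta>] by (rule binop)
  show "(neg (A i) s, neg (A i) t) \<in> ?\<rho>" if "(s, t) \<in> ?\<rho>" for s t
  proof -
    have st: "s \<in> carrier (A i)" "t \<in> carrier (A i)" "(dm_unit n A i s, dm_unit n A i t) \<in> \<theta>"
      using that by auto
    have "(dm_unit n A i (one (A i)), dm_unit n A i (one (A i))) \<in> \<theta>"
      using dm_congruence_refl[OF \<theta> dm_unit_closed[OF i closed(4)]] .
    then have "(meet (dm_product n A) (neg (dm_product n A) (dm_unit n A i s)) (dm_unit n A i (one (A i))),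
        meet (dm_product n A) (neg (dm_product n A) (dm_unit n A i t)) (dm_unit n A i (one (A i)))) \<in> \<theta>"
      by (rule dm_congruence_meet[OF \<theta> dm_congruence_neg[OF \<theta> st(3)]])
    then have "(dm_unit n A i (neg (A i) s), dm_unit n A i (neg (A i) t)) \<in> \<theta>"
      using st(1,2) by (simp add: dm_unit_neg[OF i])
    then show ?thesis
      using st closed by simp
  qed
qed

lemma zero_dm_product_closed: "zero (dm_product n A) \<in> carrier (dm_product n A)"
  and join_zero_dm_product: "join (dm_product n A) (zero (dm_product n A)) (zero (dm_product n A))
    = zero (dm_product n A)"
  by (auto simp: dm_product_def factor_zero_one intro!: restrict_ext)

lemma dm_indicator_boolean: "dm_indicator n A T \<in> carrier (boolean_skeleton (dm_product n A))"
proof -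
  have "dm_indicator n A T \<in> carrier (dm_product n A)"
    by (simp add: dm_indicator_def dm_product_def factor_zero_one)
  moreover have "join (dm_product n A) (dm_indicator n A T) (neg (dm_product n A) (dm_indicator n A T))
      = one (dm_product n A)"
    unfolding dm_indicator_def dm_product_def by (auto simp: factor_zero_one intro!: restrict_ext)
  ultimately show ?thesis
    by (simp add: carrier_boolean_skeleton)
qed

lemma dm_indicator_empty: "dm_indicator n A {} = zero (dm_product n A)"
  by (simp add: dm_indicator_def dm_product_def)

lemma dm_indicator_insert:
  "i < n \<Longrightarrow> dm_indicator n A (insert i T) =
    join (dm_product n A) (dm_unit n A i (one (A i))) (dm_indicator n A T)"
  by (auto simp: dm_indicator_def dm_unit_def dm_product_def factor_zero_one intro!: restrict_ext)

lemma join_dm_indicator: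
  assumes "X \<in> carrier (dm_product n A)" "Y \<in> carrier (dm_product n A)"
    and "\<And>j. j < n \<Longrightarrow> j \<notin> T \<Longrightarrow> X j = Y j"
  shows "join (dm_product n A) X (dm_indicator n A T) = join (dm_product n A) Y (dm_indicator n A T)"
proof -
  have XY: "X j \<in> carrier (A j)" "Y j \<in> carrier (A j)" if "j < n" for j
    using assms(1,2) that by (auto simp: dm_product_def)
  have "join (A j) (X j) (one (A j)) = one (A j)" "join (A j) (Y j) (one (A j)) = one (A j)"
    if "j < n" for j
    using de_morgan_factor[OF that] XY[OF that] by (simp_all add: de_morgan.join_one)
  then show ?thesis
    using assms(3) by (auto simp: dm_indicator_def dm_product_def intro!: restrict_ext)
qed

lemma dm_product_simple_collapse:
  assumes simple: "dm_simple (A i)" and \<theta>: "dm_congruence (dm_product n A) \<theta>"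
    and XY: "(X, Y) \<in> \<theta>" and i: "i < n" "X i \<noteq> Y i"
  shows "(dm_unit n A i (one (A i)), zero (dm_product n A)) \<in> \<theta>"
proof -
  let ?P = "dm_product n A"
  let ?\<rho> = "{(s, t). s \<in> carrier (A i) \<and> t \<in> carrier (A i) \<and> (dm_unit n A i s, dm_unit n A i t) \<in> \<theta>}"
  have XY_carrier: "X \<in> carrier ?P" "Y \<in> carrier ?P"
    using XY dm_congruence_subset[OF \<theta>] by auto
  have unit_one: "dm_unit n A i (one (A i)) \<in> carrier ?P"
    using i(1) factor_zero_one(2)[OF i(1)] by (rule dm_unit_closed)
  have "(meet ?P X (dm_unit n A i (one (A i))), meet ?P Y (dm_unit n A i (one (A i)))) \<in> \<theta>"
    using dm_congruence_meet[OF \<theta> XY dm_congruence_refl[OF \<theta> unit_one]] .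
  then have "(dm_unit n A i (X i), dm_unit n A i (Y i)) \<in> \<theta>"
    using i(1) XY_carrier by (simp add: meet_dm_unit_one)
  moreover have "X i \<in> carrier (A i)" "Y i \<in> carrier (A i)"
    using XY_carrier i(1) by (simp_all add: dm_product_def PiE_iff)
  ultimately have "(X i, Y i) \<in> ?\<rho>"
    by simp
  moreover have "?\<rho> \<subseteq> Id \<or> (zero (A i), one (A i)) \<in> ?\<rho>"
    using simple dm_congruence_coordinate[OF \<theta> i(1)] unfolding dm_simple_def by blast
  ultimately have "(dm_unit n A i (zero (A i)), dm_unit n A i (one (A i))) \<in> \<theta>"
    using i(2) by blast
  then show ?thesis
    using dm_congruence_sym[OF \<theta>] by (simp add: dm_unit_zero)
qed

lemma dm_indicator_congruent_zero:
  assumes \<theta>: "dm_congruence (dm_product n A) \<theta>" and T: "T \<subseteq> {..<n}"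
    and collapse: "\<And>i. i \<in> T \<Longrightarrow> (dm_unit n A i (one (A i)), zero (dm_product n A)) \<in> \<theta>"
  shows "(dm_indicator n A T, zero (dm_product n A)) \<in> \<theta>"
proof -
  have "finite T"
    using T by (rule finite_subset) simp
  then show ?thesis
    using T collapse
  proof (induction T)
    case empty
    then show ?case
      using dm_congruence_refl[OF \<theta> zero_dm_product_closed] by (simp add: dm_indicator_empty)
  next
    case (insert i T)
    then show ?case
      using dm_congruence_join[OF \<theta> insert.prems(2)[of i] insert.IH]
      by (simp add: dm_indicator_insert join_zero_dm_product)
  qed
qed

text \<open>A congruence relating \<open>X\<close> and \<open>Y\<close> collapses every simple factor on which they differ, so
  the indicator of those factors is a Boolean witness.\<close>
lemma boolean_determined_product_simple:
  assumes simple: "\<And>i. i < n \<Longrightarrow> dm_simple (A i)"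
  shows "boolean_determined (dm_product n A)"
  unfolding boolean_determined_def
proof (intro allI impI subsetI)
  let ?P = "dm_product n A"
  fix \<theta> q assume \<theta>: "dm_congruence ?P \<theta>" and "q \<in> \<theta>"
  then obtain X Y where q: "q = (X, Y)" "(X, Y) \<in> \<theta>" and XY: "X \<in> carrier ?P" "Y \<in> carrier ?P"
    using dm_congruence_subset[OF \<theta>] by auto
  let ?S = "{i. i < n \<and> X i \<noteq> Y i}"
  have "(dm_indicator n A ?S, zero ?P) \<in> \<theta>"
    using dm_product_simple_collapse[OF simple \<theta> q(2)] by (intro dm_indicator_congruent_zero[OF \<theta>]) auto
  then have "dm_indicator n A ?S \<in> boolean_kernel ?P \<theta>"
    by (simp add: boolean_kernel_def dm_indicator_boolean)
  moreover have "join ?P X (dm_indicator n A ?S) = join ?P Y (dm_indicator n A ?S)"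
    using XY by (rule join_dm_indicator) simp
  ultimately show "q \<in> ideal_congruence ?P (boolean_kernel ?P \<theta>)"
    using q XY by (auto intro: ideal_congruenceI)
qed

end

lemma M1_subalgebra_ops:
  assumes "A \<in> {M1_two, M1_three, M1}"
  shows "join A = m1_join" "meet A = m1_meet" "neg A = m1_neg" "zero A = E0" "one A = E1"
    and "carrier A \<in> {{E0, E1}, {E0, Ea, E1}, {E0, Ea, Eb, E1}}"
  using assms by (auto simp: M1_two_def M1_three_def M1_def restrict_dm_def)

lemma de_morgan_algebra_M1_subalgebra:
  assumes "A \<in> {M1_two, M1_three, M1}"
  shows "de_morgan_algebra A"
proof -
  have laws: "m1_join (m1_join x y) z = m1_join x (m1_join y z)"
    "m1_meet (m1_meet x y) z = m1_meet x (m1_meet y z)"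
    "m1_meet x (m1_join y z) = m1_join (m1_meet x y) (m1_meet x z)"
    "m1_join x y = m1_join y x" "m1_meet x y = m1_meet y x"
    "m1_join x (m1_meet x y) = x" "m1_meet x (m1_join x y) = x"
    "m1_join x E0 = x" "m1_meet x E1 = x" "m1_neg (m1_neg x) = x"
    "m1_neg (m1_meet x y) = m1_join (m1_neg x) (m1_neg y)" "m1_meet x x = x"
    "m1_join x (m1_join y z) = m1_join y (m1_join x z)" "m1_meet x (m1_meet y z) = m1_meet y (m1_meet x z)"
    for x y z
    by (cases x; cases y; cases z; simp)+
  have carrier: "carrier A = {E0, E1} \<or> carrier A = {E0, Ea, E1} \<or> carrier A = {E0, Ea, Eb, E1}"
    using M1_subalgebra_ops(6)[OF assms] by simp
  have closed: "m1_join x y \<in> carrier A" "m1_meet x y \<in> carrier A" "m1_neg x \<in> carrier A"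
    if "x \<in> carrier A" "y \<in> carrier A" for x y
    using carrier that by (elim disjE; cases x; cases y; simp)+
  have "E0 \<in> carrier A" "E1 \<in> carrier A"
    using M1_subalgebra_ops(6)[OF assms] by auto
  then show ?thesis
    unfolding de_morgan_algebra_def M1_subalgebra_ops[OF assms]
    by (simp add: closed laws)
qed

lemma M1_congruence_collapses:
  assumes \<rho>: "dm_congruence A \<rho>" and ops: "meet A = m1_meet" "neg A = m1_neg"
    and st: "(s, t) \<in> \<rho>" "s \<noteq> t"
  shows "(E0, E1) \<in> \<rho>"
proof -
  have neg: "(m1_neg x, m1_neg y) \<in> \<rho>" if "(x, y) \<in> \<rho>" for x y
    using dm_congruence_neg[OF \<rho> that] ops by simp
  have from_zero: "(E0, E1) \<in> \<rho>" if x: "(E0, x) \<in> \<rho>" "x \<noteq> E0" for x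
  proof (cases "x = E1")
    case False
    with x(2) have "m1_neg x = x"
      by (cases x) simp_all
    then have "(x, E1) \<in> \<rho>"
      using dm_congruence_sym[OF \<rho> neg[OF x(1)]] by simp
    then show ?thesis
      by (rule dm_congruence_trans[OF \<rho> x(1)])
  qed (use x in simp)
  have "s \<in> carrier A"
    using st(1) dm_congruence_subset[OF \<rho>] by blast
  then have "(m1_meet s s, m1_meet t s) \<in> \<rho>"
    using dm_congruence_meet[OF \<rho> st(1) dm_congruence_refl[OF \<rho>]] ops by simp
  then have meet_s: "(s, m1_meet t s) \<in> \<rho>"
    by (cases s) simp_all
  note facts = st(1) dm_congruence_sym[OF \<rho> st(1)] neg[OF st(1)] dm_congruence_sym[OF \<rho> neg[OF st(1)]]
    meet_s dm_congruence_sym[OF \<rho> meet_s]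
  have "\<exists>x. (E0, x) \<in> \<rho> \<and> x \<noteq> E0"
    using st(2) facts by (cases s; cases t) auto
  then show ?thesis
    using from_zero by blast
qed

lemma dm_simple_M1_subalgebra:
  assumes "A \<in> {M1_two, M1_three, M1}"
  shows "dm_simple A"
  unfolding dm_simple_def
proof (intro allI impI)
  fix \<rho> assume \<rho>: "dm_congruence A \<rho>"
  show "\<rho> \<subseteq> Id \<or> (zero A, one A) \<in> \<rho>"
    using M1_congruence_collapses[OF \<rho> M1_subalgebra_ops(2,3)[OF assms]] M1_subalgebra_ops(4,5)[OF assms]
    by auto
qed

theorem mainTheorem3:
  fixes M :: "'a dm"
  assumes "de_morgan_algebra M" and "finite (carrier M)"
  shows "perfect_extension M (boolean_skeleton M) \<longleftrightarrow>
    (\<exists>n A. (\<forall>i<n. A i \<in> {M1_two, M1_three, M1}) \<and> dm_isomorphic M (dm_product n A))"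
proof -
  interpret de_morgan M
    using assms(1) by (rule de_morgan.intro)
  show ?thesis
  proof
    assume "perfect_extension M (boolean_skeleton M)"
    then show "\<exists>n A. (\<forall>i<n. A i \<in> {M1_two, M1_three, M1}) \<and> dm_isomorphic M (dm_product n A)"
      using assms(2) boolean_determined_product_decomposition perfect_extension_iff_boolean_determined
      by blast
  next
    assume "\<exists>n A. (\<forall>i<n. A i \<in> {M1_two, M1_three, M1}) \<and> dm_isomorphic M (dm_product n A)"
    then obtain n and A :: "nat \<Rightarrow> m1 dm" and h
      where A: "\<forall>i<n. A i \<in> {M1_two, M1_three, M1}" and h: "dm_iso M (dm_product n A) h"
      unfolding dm_isomorphic_def by blast
    have "boolean_determined (dm_product n A)"
      using A by (intro boolean_determined_product_simple de_morgan_algebra_M1_subalgebra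
          dm_simple_M1_subalgebra) simp_all
    then show "perfect_extension M (boolean_skeleton M)"
      using boolean_determined_iso[OF h] perfect_extension_iff_boolean_determined by simp
  qed
qed

end
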